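(* Let $G\subset\mathbb{R}^2$ be a bounded $C^2$-domain and $x_0\in\overline{G}$. Then there is a relatively open set $W\subset\overline{G}$ containing $x_0$ such that whenever $K\subset W$ is compact, $V$ is an open neighbourhood of $K$ in $W$ and $\eta\in(0,\frac12)$, there exist $\varphi\in C^2(\overline{G})$ and $C_\varphi>0$ such that \[ 0\le\varphi\le1\text{ in }\overline{G},\quad \varphi=0\text{ in }\overline{G}\setminus V,\quad \varphi=1\text{ in }K,\quad \partial_\nu\varphi=0\text{ on }\partial G, \] and \[ |\nabla\varphi|\le C_\varphi\varphi^{1-\eta}\quad\text{and}\quad|\Delta\varphi|\le C_\varphi\varphi^{1-2\eta}\qquad\text{in }\overline{G}. \]
   Context: $\nu$ denotes the outer unit normal on $\partial G$. *)

theory Defs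
  imports "HOL-Analysis.Analysis"
begin

definition partial :: "2 \<Rightarrow> (real^2 \<Rightarrow> real) \<Rightarrow> real^2 \<Rightarrow> real" where
  "partial i f x = frechet_derivative f (at x) (axis i 1)"

definition grad :: "(real^2 \<Rightarrow> real) \<Rightarrow> real^2 \<Rightarrow> real^2" where
  "grad f x = (\<chi> i. partial i f x)"

definition laplacian :: "(real^2 \<Rightarrow> real) \<Rightarrow> real^2 \<Rightarrow> real" where
  "laplacian f x = (\<Sum>i\<in>UNIV. partial i (partial i f) x)"

definition C2_on :: "(real^2) set \<Rightarrow> (real^2 \<Rightarrow> real) \<Rightarrow> bool" where
  "C2_on U f \<longleftrightarrow>
     (\<forall>x\<in>U. f differentiable (at x)) \<and>
     (\<forall>i. \<forall>x\<in>U. partial i f differentiable (at x)) \<and>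
     (\<forall>i j. continuous_on U (partial j (partial i f)))"

definition C2_closure :: "(real^2) set \<Rightarrow> (real^2 \<Rightarrow> real) \<Rightarrow> bool" where
  "C2_closure G f \<longleftrightarrow> (\<exists>U. open U \<and> closure G \<subseteq> U \<and> C2_on U f)"

definition C2_real :: "(real \<Rightarrow> real) \<Rightarrow> bool" where
  "C2_real h \<longleftrightarrow> (\<exists>h' h''. (\<forall>t. (h has_real_derivative h' t) (at t)) \<and>
                          (\<forall>t. (h' has_real_derivative h'' t) (at t)) \<and>
                          continuous_on UNIV h'')"

definition C2_domain :: "(real^2) set \<Rightarrow> bool" where
  "C2_domain G \<longleftrightarrow> open G \<and> connected G \<and> G \<noteq> {} \<and>
     (\<forall>p\<in>frontier G. \<exists>r>0. \<exists>(Q::real^2 \<Rightarrow> real^2) h. orthogonal_transformation Q \<and> C2_real h \<and>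
        G \<inter> ball p r = {x \<in> ball p r. (Q (x - p)) $ 2 < h ((Q (x - p)) $ 1)})"

text \<open>Outer unit normal at a boundary point p: a unit vector orthogonal to the boundary
  at p (in the sense of the tangent condition) pointing out of G.\<close>
definition outer_normal :: "(real^2) set \<Rightarrow> real^2 \<Rightarrow> real^2" where
  "outer_normal G p = (SOME n. norm n = 1 \<and>
      ((\<lambda>q. ((q - p) \<bullet> n) / norm (q - p)) \<longlongrightarrow> 0) (at p within frontier G) \<and>
      (\<exists>e>0. \<forall>t. 0 < t \<and> t < e \<longrightarrow> p - t *\<^sub>R n \<in> G))"

end

theory Submission
  imports Defs
begin

text \<open>
  Suppose \<open>\<Psi>\<close> is a \<open>C\<^sup>2\<close> map to the plane, injective on \<open>closure G\<close> near the point, whose components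
  have vanishing normal derivative on \<open>\<partial>G\<close>. Covering \<open>K\<close> by finitely many small preimages of balls
  and composing bumps on the \<open>\<Psi>\<close>-side with a \<open>C\<^sup>2\<close> step function gives a \<open>C\<^sup>2\<close> function \<open>f\<close>
  with values in \<open>[0,1]\<close>, equal to 1 on \<open>K\<close>, supported in \<open>V\<close> and satisfying the Neumann condition;
  \<open>\<phi> = f\<^sup>k\<close> with \<open>k \<ge> 1/\<eta> + 2\<close> then obeys the gradient and Laplacian bounds, since every
  derivative of \<open>f\<^sup>k\<close> up to order two keeps a factor \<open>f ^ (k - 2)\<close>.

  At interior points the Cartesian coordinates serve as \<open>\<Psi>\<close>. At a boundary point, where \<open>G\<close> lies
  below the graph of \<open>h\<close> in rotated coordinates \<open>(Y1, Y2)\<close>, take \<open>\<Psi> = (s, t\<^sup>2)\<close> with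
  \<open>t = Y2 - h(Y1)\<close> and \<open>s = Y1 + W(Y1 + t) - W(Y1)\<close>, where \<open>W' = h'/(1 + h'\<^sup>2)\<close>: \<open>t\<^sup>2\<close> is flat on
  the boundary, \<open>W\<close> is chosen so that \<open>\<partial>\<^sub>\<nu>s = 0\<close> there, and \<open>\<Psi>\<close> is injective below the
  graph because \<open>t \<le> 0\<close> there and \<open>s\<close> is increasing in \<open>Y1\<close> near the point.
\<close>

section \<open>Explicit second derivatives on the plane\<close>

definition C2_derivs :: "(real^2 \<Rightarrow> real) \<Rightarrow> (real^2 \<Rightarrow> real^2) \<Rightarrow> (real^2 \<Rightarrow> 2 \<Rightarrow> real^2) \<Rightarrow> bool"
  where "C2_derivs f g H \<longleftrightarrow>
    (\<forall>x. (f has_derivative (\<lambda>v. g x \<bullet> v)) (at x)) \<and>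
    (\<forall>x i. ((\<lambda>y. g y $ i) has_derivative (\<lambda>v. H x i \<bullet> v)) (at x)) \<and>
    (\<forall>i. continuous_on UNIV (\<lambda>x. H x i))"

definition C2_everywhere :: "(real^2 \<Rightarrow> real) \<Rightarrow> bool"
  where "C2_everywhere f \<longleftrightarrow> (\<exists>g H. C2_derivs f g H)"

definition C2_derivs_real :: "(real \<Rightarrow> real) \<Rightarrow> (real \<Rightarrow> real) \<Rightarrow> (real \<Rightarrow> real) \<Rightarrow> bool"
  where "C2_derivs_real p p' p'' \<longleftrightarrow>
    (\<forall>t. (p has_real_derivative p' t) (at t)) \<and> (\<forall>t. (p' has_real_derivative p'' t) (at t)) \<and>
    continuous_on UNIV p''"

lemma C2_real_iff: "C2_real h \<longleftrightarrow> (\<exists>h' h''. C2_derivs_real h h' h'')"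
  unfolding C2_real_def C2_derivs_real_def ..

lemma C2_derivs_continuous: "C2_derivs f g H \<Longrightarrow> continuous_on UNIV f"
  unfolding C2_derivs_def
  by (auto intro!: continuous_at_imp_continuous_on has_derivative_continuous)

lemma C2_derivs_continuous_component: "C2_derivs f g H \<Longrightarrow> continuous_on UNIV (\<lambda>x. g x $ i)"
  unfolding C2_derivs_def
  by (auto intro!: continuous_at_imp_continuous_on has_derivative_continuous)

lemma C2_derivs_continuous_grad: "C2_derivs f g H \<Longrightarrow> continuous_on UNIV g"
  using continuous_on_vec_lambda[of UNIV "\<lambda>i x. g x $ i"] C2_derivs_continuous_component
  by (simp add: vec_lambda_eta)

lemma C2_derivs_frechet_derivative:
  "C2_derivs f g H \<Longrightarrow> frechet_derivative f (at x) v = g x \<bullet> v"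
  unfolding C2_derivs_def by (metis frechet_derivative_at)

lemma C2_derivs_partial: "C2_derivs f g H \<Longrightarrow> partial i f = (\<lambda>x. g x $ i)"
  by (auto simp: partial_def C2_derivs_frechet_derivative inner_axis)

lemma C2_derivs_partial_partial: "C2_derivs f g H \<Longrightarrow> partial j (partial i f) x = H x i $ j"
proof -
  assume f: "C2_derivs f g H"
  then have "frechet_derivative (\<lambda>y. g y $ i) (at x) = (\<lambda>v. H x i \<bullet> v)"
    unfolding C2_derivs_def by (metis frechet_derivative_at)
  then show ?thesis
    by (simp add: C2_derivs_partial[OF f] partial_def inner_axis)
qed

lemma C2_derivs_grad: "C2_derivs f g H \<Longrightarrow> grad f x = g x"
  by (simp add: grad_def C2_derivs_partial vec_eq_iff)

lemma C2_derivs_laplacian: "C2_derivs f g H \<Longrightarrow> laplacian f x = (\<Sum>i\<in>UNIV. H x i $ i)"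
  by (simp add: laplacian_def C2_derivs_partial_partial)

lemma C2_derivs_imp_C2_on:
  assumes f: "C2_derivs f g H"
  shows "C2_on U f"
proof -
  have "continuous_on U (partial j (partial i f))" for i j
    using f unfolding C2_derivs_partial_partial[OF f, abs_def] C2_derivs_def
    by (metis continuous_on_component continuous_on_subset subset_UNIV)
  moreover have "f differentiable (at x)" and "(\<lambda>y. g y $ i) differentiable (at x)" for x i
    using f unfolding C2_derivs_def by (metis differentiableI)+
  ultimately show ?thesis
    unfolding C2_on_def C2_derivs_partial[OF f] by blast
qed

lemma C2_derivs_const: "C2_derivs (\<lambda>x. c) (\<lambda>x. 0) (\<lambda>x i. 0)"
  unfolding C2_derivs_def
  by (auto intro!: has_derivative_eq_rhs[OF has_derivative_const] simp: fun_eq_iff)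

lemma C2_derivs_affine: "C2_derivs (\<lambda>x. a \<bullet> x + c) (\<lambda>x. a) (\<lambda>x i. 0)"
  unfolding C2_derivs_def
  by (auto intro!: derivative_eq_intros simp flip: inner_zero_left)

lemma C2_derivs_add:
  assumes "C2_derivs f gf Hf" and "C2_derivs g gg Hg"
  shows "C2_derivs (\<lambda>x. f x + g x) (\<lambda>x. gf x + gg x) (\<lambda>x i. Hf x i + Hg x i)"
  using assms unfolding C2_derivs_def
  by (auto intro!: derivative_eq_intros continuous_intros simp: inner_add_left)

lemma C2_derivs_mult:
  assumes f: "C2_derivs f gf Hf" and g: "C2_derivs g gg Hg"
  shows "C2_derivs (\<lambda>x. f x * g x) (\<lambda>x. f x *\<^sub>R gg x + g x *\<^sub>R gf x)
     (\<lambda>x i. (gg x $ i) *\<^sub>R gf x + f x *\<^sub>R Hg x i + (gf x $ i) *\<^sub>R gg x + g x *\<^sub>R Hf x i)"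
  unfolding C2_derivs_def
proof (intro conjI allI)
  fix x
  have "((\<lambda>x. f x * g x) has_derivative (\<lambda>v. f x * (gg x \<bullet> v) + (gf x \<bullet> v) * g x)) (at x)"
    using f g unfolding C2_derivs_def by (intro has_derivative_mult) auto
  then show "((\<lambda>x. f x * g x) has_derivative (\<lambda>v. (f x *\<^sub>R gg x + g x *\<^sub>R gf x) \<bullet> v)) (at x)"
    by (rule has_derivative_eq_rhs) (simp add: fun_eq_iff inner_add_left)
next
  fix x i
  have "((\<lambda>y. f y * gg y $ i + g y * gf y $ i) has_derivative
     (\<lambda>v. f x * (Hg x i \<bullet> v) + (gf x \<bullet> v) * gg x $ i + (g x * (Hf x i \<bullet> v) + (gg x \<bullet> v) * gf x $ i))) (at x)"
    using f g unfolding C2_derivs_def by (intro has_derivative_add has_derivative_mult) auto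
  then show "((\<lambda>y. (f y *\<^sub>R gg y + g y *\<^sub>R gf y) $ i) has_derivative
      (\<lambda>v. ((gg x $ i) *\<^sub>R gf x + f x *\<^sub>R Hg x i + (gf x $ i) *\<^sub>R gg x + g x *\<^sub>R Hf x i) \<bullet> v)) (at x)"
    unfolding vector_add_component vector_scaleR_component real_scaleR_def
    by (rule has_derivative_eq_rhs) (simp add: fun_eq_iff inner_add_left algebra_simps)
next
  fix i
  have "continuous_on UNIV (\<lambda>x. Hf x i)" and "continuous_on UNIV (\<lambda>x. Hg x i)"
    using f g unfolding C2_derivs_def by auto
  then show "continuous_on UNIV
      (\<lambda>x. (gg x $ i) *\<^sub>R gf x + f x *\<^sub>R Hg x i + (gf x $ i) *\<^sub>R gg x + g x *\<^sub>R Hf x i)"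
    by (intro continuous_on_add continuous_on_scaleR C2_derivs_continuous[OF f] C2_derivs_continuous[OF g]
        C2_derivs_continuous_grad[OF f] C2_derivs_continuous_grad[OF g]
        C2_derivs_continuous_component[OF f] C2_derivs_continuous_component[OF g])
qed

lemma C2_derivs_compose:
  assumes p: "C2_derivs_real p p' p''" and f: "C2_derivs f g H"
  shows "C2_derivs (\<lambda>x. p (f x)) (\<lambda>x. p' (f x) *\<^sub>R g x)
     (\<lambda>x i. (p'' (f x) * g x $ i) *\<^sub>R g x + p' (f x) *\<^sub>R H x i)"
  unfolding C2_derivs_def
proof (intro conjI allI)
  fix x
  have "((\<lambda>x. p (f x)) has_derivative (\<lambda>v. (g x \<bullet> v) * p' (f x))) (at x)"
    using p f unfolding C2_derivs_def C2_derivs_real_def by (intro DERIV_compose_FDERIV) auto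
  then show "((\<lambda>x. p (f x)) has_derivative (\<lambda>v. (p' (f x) *\<^sub>R g x) \<bullet> v)) (at x)"
    by (simp add: mult.commute)
next
  fix x i
  have "((\<lambda>x. p' (f x)) has_derivative (\<lambda>v. (g x \<bullet> v) * p'' (f x))) (at x)"
    using p f unfolding C2_derivs_def C2_derivs_real_def by (intro DERIV_compose_FDERIV) auto
  then have "((\<lambda>y. p' (f y) * g y $ i) has_derivative
      (\<lambda>v. p' (f x) * (H x i \<bullet> v) + ((g x \<bullet> v) * p'' (f x)) * g x $ i)) (at x)"
    using f unfolding C2_derivs_def by (intro has_derivative_mult) auto
  then show "((\<lambda>y. (p' (f y) *\<^sub>R g y) $ i) has_derivative
      (\<lambda>v. ((p'' (f x) * g x $ i) *\<^sub>R g x + p' (f x) *\<^sub>R H x i) \<bullet> v)) (at x)"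
    unfolding vector_add_component vector_scaleR_component real_scaleR_def
    by (rule has_derivative_eq_rhs) (simp add: fun_eq_iff inner_add_left algebra_simps)
next
  fix i
  have "continuous_on UNIV p'"
    using p unfolding C2_derivs_real_def
    by (intro continuous_at_imp_continuous_on ballI DERIV_isCont) blast
  moreover have "continuous_on UNIV p''" and "continuous_on UNIV (\<lambda>x. H x i)"
    using p f unfolding C2_derivs_real_def C2_derivs_def by auto
  ultimately show "continuous_on UNIV (\<lambda>x. (p'' (f x) * g x $ i) *\<^sub>R g x + p' (f x) *\<^sub>R H x i)"
    using C2_derivs_continuous[OF f]
    by (intro continuous_on_add continuous_on_scaleR continuous_on_mult
        continuous_on_compose2[where g = p' and f = f and t = UNIV]
        continuous_on_compose2[where g = p'' and f = f and t = UNIV]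
        C2_derivs_continuous_grad[OF f] C2_derivs_continuous_component[OF f]) auto
qed

lemma C2_derivs_real_power:
  "C2_derivs_real (\<lambda>t. t ^ k) (\<lambda>t. real k * t ^ (k - 1)) (\<lambda>t. real k * real (k - 1) * t ^ (k - 2))"
  unfolding C2_derivs_real_def
  by (auto intro!: derivative_eq_intros continuous_intros simp: numeral_2_eq_2)

lemma C2_everywhere_const: "C2_everywhere (\<lambda>x. c)"
  using C2_derivs_const unfolding C2_everywhere_def by blast

lemma C2_everywhere_affine: "C2_everywhere (\<lambda>x. a \<bullet> x + c)"
  using C2_derivs_affine unfolding C2_everywhere_def by blast

lemma C2_everywhere_add: "C2_everywhere f \<Longrightarrow> C2_everywhere g \<Longrightarrow> C2_everywhere (\<lambda>x. f x + g x)"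
  using C2_derivs_add unfolding C2_everywhere_def by blast

lemma C2_everywhere_mult: "C2_everywhere f \<Longrightarrow> C2_everywhere g \<Longrightarrow> C2_everywhere (\<lambda>x. f x * g x)"
  using C2_derivs_mult unfolding C2_everywhere_def by blast

lemma C2_everywhere_compose:
  "C2_derivs_real p p' p'' \<Longrightarrow> C2_everywhere f \<Longrightarrow> C2_everywhere (\<lambda>x. p (f x))"
  using C2_derivs_compose unfolding C2_everywhere_def by blast

lemma C2_everywhere_diff:
  assumes "C2_everywhere f" "C2_everywhere g"
  shows "C2_everywhere (\<lambda>x. f x - g x)"
proof -
  have "C2_everywhere (\<lambda>x. f x + (- 1) * g x)"
    by (intro C2_everywhere_add C2_everywhere_mult C2_everywhere_const assms)
  then show ?thesis by simp
qed

definition C2_neumann :: "((real^2) \<times> (real^2)) set \<Rightarrow> (real^2 \<Rightarrow> real) \<Rightarrow> bool"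
  where "C2_neumann A f \<longleftrightarrow> C2_everywhere f \<and> (\<forall>y n. (y, n) \<in> A \<longrightarrow> frechet_derivative f (at y) n = 0)"

lemma C2_neumann_imp_C2_everywhere: "C2_neumann A f \<Longrightarrow> C2_everywhere f"
  unfolding C2_neumann_def by simp

lemma C2_neumann_empty: "C2_everywhere f \<Longrightarrow> C2_neumann {} f"
  unfolding C2_neumann_def by simp

lemma C2_neumann_Un: "C2_neumann A f \<Longrightarrow> C2_neumann A' f \<Longrightarrow> C2_neumann (A \<union> A') f"
  unfolding C2_neumann_def by auto

lemma C2_neumann_const: "C2_neumann A (\<lambda>x. c)"
  unfolding C2_neumann_def C2_everywhere_def
  using C2_derivs_const C2_derivs_frechet_derivative[OF C2_derivs_const] by auto

lemma C2_neumann_add: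
  assumes "C2_neumann A f" "C2_neumann A g"
  shows "C2_neumann A (\<lambda>x. f x + g x)"
proof -
  obtain gf Hf gg Hg where f: "C2_derivs f gf Hf" and g: "C2_derivs g gg Hg"
    using assms unfolding C2_neumann_def C2_everywhere_def by blast
  note fg = C2_derivs_add[OF f g]
  show ?thesis
    using fg assms unfolding C2_neumann_def C2_everywhere_def C2_derivs_frechet_derivative[OF fg]
      C2_derivs_frechet_derivative[OF f] C2_derivs_frechet_derivative[OF g]
    by (auto simp: inner_add_left)
qed

lemma C2_neumann_sum:
  "finite I \<Longrightarrow> (\<And>i. i \<in> I \<Longrightarrow> C2_neumann A (f i)) \<Longrightarrow> C2_neumann A (\<lambda>x. \<Sum>i\<in>I. f i x)"
  by (induction I rule: finite_induct) (auto intro: C2_neumann_const C2_neumann_add)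

lemma C2_neumann_compose:
  assumes p: "C2_derivs_real p p' p''" and f: "C2_neumann A f"
  shows "C2_neumann A (\<lambda>x. p (f x))"
proof -
  obtain g H where fd: "C2_derivs f g H"
    using f unfolding C2_neumann_def C2_everywhere_def by blast
  note pf = C2_derivs_compose[OF p fd]
  show ?thesis
    using pf f unfolding C2_neumann_def C2_everywhere_def C2_derivs_frechet_derivative[OF pf]
      C2_derivs_frechet_derivative[OF fd]
    by auto
qed

lemma C2_neumann_compose_flat:
  assumes p: "C2_derivs_real p p' p''" and f: "C2_everywhere f"
    and flat: "\<And>y n. (y, n) \<in> A \<Longrightarrow> p' (f y) = 0"
  shows "C2_neumann A (\<lambda>x. p (f x))"
proof -
  obtain g H where fd: "C2_derivs f g H"
    using f unfolding C2_everywhere_def by blast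
  note pf = C2_derivs_compose[OF p fd]
  show ?thesis
    using pf flat unfolding C2_neumann_def C2_everywhere_def C2_derivs_frechet_derivative[OF pf]
    by auto
qed

section \<open>A \<open>C\<^sup>2\<close> step function\<close>

definition clamp01 :: "real \<Rightarrow> real" where "clamp01 t = max 0 (min 1 t)"

lemma DERIV_glue:
  fixes f g k :: "real \<Rightarrow> real"
  assumes "(g has_real_derivative D) (at x)" and "(k has_real_derivative D) (at x)"
    and left: "\<forall>\<^sub>F y in at_left x. f y = g y" and right: "\<forall>\<^sub>F y in at_right x. f y = k y"
    and "f x = g x" and "f x = k x"
  shows "(f has_real_derivative D) (at x)"
proof -
  have "((\<lambda>y. (g y - g x) / (y - x)) \<longlongrightarrow> D) (at_left x)"
    and "((\<lambda>y. (k y - k x) / (y - x)) \<longlongrightarrow> D) (at_right x)"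
    using assms(1,2) unfolding has_field_derivative_iff filterlim_at_split by blast+
  moreover have "\<forall>\<^sub>F y in at_left x. (g y - g x) / (y - x) = (f y - f x) / (y - x)"
    using left by eventually_elim (simp add: assms(5))
  moreover have "\<forall>\<^sub>F y in at_right x. (k y - k x) / (y - x) = (f y - f x) / (y - x)"
    using right by eventually_elim (simp add: assms(6))
  ultimately show ?thesis
    unfolding has_field_derivative_iff filterlim_at_split by (blast intro: Lim_transform_eventually)
qed

lemma DERIV_compose_clamp01:
  assumes d: "\<And>t. (P has_real_derivative P' t) (at t)" and "P' 0 = 0" and "P' 1 = 0"
  shows "((\<lambda>t. P (clamp01 t)) has_real_derivative P' (clamp01 t)) (at t)"
proof -
  have locally_const: "((\<lambda>t. P (clamp01 t)) has_real_derivative 0) (at t)"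
    if "open S" "t \<in> S" "\<And>s. s \<in> S \<Longrightarrow> clamp01 s = c" for S c
  proof -
    have "\<forall>\<^sub>F s in nhds t. P (clamp01 s) = P c"
      using eventually_nhds_in_open[OF that(1,2)] by eventually_elim (simp add: that(3))
    then show ?thesis by (subst DERIV_cong_ev[OF refl _ refl]) (auto intro: DERIV_const)
  qed
  have ev_left: "\<forall>\<^sub>F s in at_left a. s \<in> {a - 1<..<a}" and ev_right: "\<forall>\<^sub>F s in at_right a. s \<in> {a<..<a + 1}"
    for a :: real
    by (rule eventually_at_left_real eventually_at_right_real; simp)+
  consider "t < 0" | "t = 0" | "0 < t \<and> t < 1" | "t = 1" | "1 < t" by linarith
  then show ?thesis
  proof cases
    case 1
    then show ?thesis using locally_const[of "{..<0}" 0] assms by (simp add: clamp01_def)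
  next
    case 5
    then show ?thesis using locally_const[of "{1<..}" 1] assms by (simp add: clamp01_def)
  next
    case 3
    have "\<forall>\<^sub>F s in nhds t. s \<in> {0<..<1}"
      using 3 by (intro eventually_nhds_in_open) auto
    then have "\<forall>\<^sub>F s in nhds t. P (clamp01 s) = P s"
      by eventually_elim (auto simp: clamp01_def)
    then show ?thesis using 3 d[of t] by (subst DERIV_cong_ev[OF refl _ refl]) (auto simp: clamp01_def)
  next
    case 2
    have "((\<lambda>t. P (clamp01 t)) has_real_derivative 0) (at 0)"
    proof (rule DERIV_glue[where g = "\<lambda>y. P 0" and k = P])
      show "\<forall>\<^sub>F y in at_left 0. P (clamp01 y) = P 0"
        using ev_left[of 0] by eventually_elim (simp add: clamp01_def)
      show "\<forall>\<^sub>F y in at_right 0. P (clamp01 y) = P y"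
        using ev_right[of 0] by eventually_elim (simp add: clamp01_def)
    qed (use d[of 0] assms(2) in \<open>auto intro: DERIV_const simp: clamp01_def\<close>)
    then show ?thesis using 2 assms(2) by (simp add: clamp01_def)
  next
    case 4
    have "((\<lambda>t. P (clamp01 t)) has_real_derivative 0) (at 1)"
    proof (rule DERIV_glue[where g = P and k = "\<lambda>y. P 1"])
      show "\<forall>\<^sub>F y in at_left 1. P (clamp01 y) = P y"
        using ev_left[of 1] by eventually_elim (simp add: clamp01_def)
      show "\<forall>\<^sub>F y in at_right 1. P (clamp01 y) = P 1"
        using ev_right[of 1] by eventually_elim (simp add: clamp01_def)
    qed (use d[of 1] assms(3) in \<open>auto intro: DERIV_const simp: clamp01_def\<close>)
    then show ?thesis using 4 assms(3) by (simp add: clamp01_def)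
  qed
qed

text \<open>The quintic \<open>10 s\<^sup>3 - 15 s\<^sup>4 + 6 s\<^sup>5\<close> is the polynomial of least degree rising from 0 to 1
  with vanishing first and second derivatives at both ends.\<close>
definition smoothstep :: "real \<Rightarrow> real"
  where "smoothstep t = (let s = clamp01 t in 10 * s ^ 3 - 15 * s ^ 4 + 6 * s ^ 5)"

definition smoothstep' :: "real \<Rightarrow> real"
  where "smoothstep' t = (let s = clamp01 t in 30 * s\<^sup>2 * (1 - s)\<^sup>2)"

definition smoothstep'' :: "real \<Rightarrow> real"
  where "smoothstep'' t = (let s = clamp01 t in 60 * s * (1 - s) * (1 - 2 * s))"

lemma C2_derivs_real_smoothstep: "C2_derivs_real smoothstep smoothstep' smoothstep''"
  unfolding C2_derivs_real_def
proof (intro conjI allI)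
  fix t
  have "((\<lambda>s. 10 * s ^ 3 - 15 * s ^ 4 + 6 * s ^ 5) has_real_derivative 30 * s\<^sup>2 * (1 - s)\<^sup>2) (at s)"
    and "((\<lambda>s. 30 * s\<^sup>2 * (1 - s)\<^sup>2) has_real_derivative 60 * s * (1 - s) * (1 - 2 * s)) (at s)"
    for s :: real
    by (rule derivative_eq_intros refl
        | simp add: algebra_simps power2_eq_square power3_eq_cube power4_eq_xxxx)+
  note polynomial_derivs = this
  show "(smoothstep has_real_derivative smoothstep' t) (at t)"
    unfolding smoothstep_def[abs_def] smoothstep'_def Let_def
    by (rule DERIV_compose_clamp01[OF polynomial_derivs(1)]) simp_all
  show "(smoothstep' has_real_derivative smoothstep'' t) (at t)"
    unfolding smoothstep'_def[abs_def] smoothstep''_def Let_def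
    by (rule DERIV_compose_clamp01[OF polynomial_derivs(2)]) simp_all
next
  show "continuous_on UNIV smoothstep''"
    unfolding smoothstep''_def[abs_def] Let_def clamp01_def by (intro continuous_intros)
qed

lemma smoothstep_nonpos: "t \<le> 0 \<Longrightarrow> smoothstep t = 0"
  by (simp add: smoothstep_def clamp01_def)

lemma smoothstep_ge1: "1 \<le> t \<Longrightarrow> smoothstep t = 1"
  by (simp add: smoothstep_def clamp01_def)

lemma smoothstep'_nonpos: "t \<le> 0 \<Longrightarrow> smoothstep' t = 0"
  by (simp add: smoothstep'_def clamp01_def)

lemma smoothstep_bounds: "0 \<le> smoothstep t \<and> smoothstep t \<le> 1"
proof -
  define s where "s = clamp01 t"
  have s: "0 \<le> s" "s \<le> 1" unfolding s_def clamp01_def by auto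
  have "smoothstep t = s ^ 3 * (6 * (s - 5/4)\<^sup>2 + 5/8)"
    and "1 - smoothstep t = (1 - s) ^ 3 * (1 + 3 * s + 6 * s\<^sup>2)"
    unfolding smoothstep_def s_def[symmetric] Let_def
    by (simp_all add: algebra_simps power2_eq_square power3_eq_cube power4_eq_xxxx power_def)
  moreover have "0 \<le> s ^ 3 * (6 * (s - 5/4)\<^sup>2 + 5/8)" "0 \<le> (1 - s) ^ 3 * (1 + 3 * s + 6 * s\<^sup>2)"
    using s by simp_all
  ultimately show ?thesis by linarith
qed

section \<open>Cut-off functions from \<open>C\<^sup>2\<close> coordinates\<close>

lemma coordinate_ball_separation:
  fixes \<Psi> :: "'a::metric_space \<Rightarrow> 'b::metric_space"
  assumes "continuous_on S \<Psi>" "compact S" "open B" "inj_on \<Psi> (S \<inter> \<Psi> -` B)"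
    and "q \<in> S" "\<Psi> q \<in> B" "open U" "q \<in> U"
  shows "\<exists>d>0. (\<forall>y\<in>S. dist (\<Psi> y) (\<Psi> q) < d \<longrightarrow> y \<in> U) \<and> cball (\<Psi> q) d \<subseteq> B"
proof -
  obtain e where e: "e > 0" "cball (\<Psi> q) e \<subseteq> B"
    using assms(3,6) open_contains_cball by blast
  have "\<Psi> y \<noteq> \<Psi> q" if "y \<in> S - U" for y
    using assms(4-8) that unfolding inj_on_def by blast
  then obtain m where m: "m > 0" "\<forall>y\<in>S - U. m \<le> dist (\<Psi> y) (\<Psi> q)"
  proof (cases "S - U = {}")
    case False
    have "compact (S - U)"
      using assms(2,7) by (simp add: Diff_eq compact_Int_closed closed_Compl)
    moreover have "continuous_on (S - U) (\<lambda>y. dist (\<Psi> y) (\<Psi> q))"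
      using assms(1) by (intro continuous_intros) (auto intro: continuous_on_subset)
    ultimately obtain y0 where "y0 \<in> S - U" "\<forall>y\<in>S - U. dist (\<Psi> y0) (\<Psi> q) \<le> dist (\<Psi> y) (\<Psi> q)"
      using continuous_attains_inf[OF _ False] by blast
    with \<open>\<And>y. y \<in> S - U \<Longrightarrow> \<Psi> y \<noteq> \<Psi> q\<close> show thesis
      by (intro that[of "dist (\<Psi> y0) (\<Psi> q)"]) auto
  qed (auto intro: that[of 1])
  have "y \<in> U" if "y \<in> S" "dist (\<Psi> y) (\<Psi> q) < min e m" for y
    using m(2) that by force
  moreover have "cball (\<Psi> q) (min e m) \<subseteq> B"
    using e by (auto simp: subset_eq)
  ultimately show ?thesis
    using e m by (intro exI[of _ "min e m"]) auto
qed

lemma finite_coordinate_cover: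
  fixes \<Psi> :: "'a::metric_space \<Rightarrow> 'b::metric_space"
  assumes "continuous_on UNIV \<Psi>" "compact S" "open B" "inj_on \<Psi> (S \<inter> \<Psi> -` B)"
    and "compact K" "K \<subseteq> S \<inter> \<Psi> -` B" "open U" "K \<subseteq> U"
  obtains T \<delta> where "finite T" "T \<subseteq> K" "\<forall>q\<in>T. 0 < \<delta> q"
    "K \<subseteq> (\<Union>q\<in>T. \<Psi> -` ball (\<Psi> q) (\<delta> q))"
    "\<forall>q\<in>T. \<forall>y\<in>S. dist (\<Psi> y) (\<Psi> q) < 2 * \<delta> q \<longrightarrow> y \<in> U"
    "\<forall>q\<in>T. cball (\<Psi> q) (2 * \<delta> q) \<subseteq> B"
proof -
  have "\<forall>q\<in>K. \<exists>d>0. (\<forall>y\<in>S. dist (\<Psi> y) (\<Psi> q) < 2 * d \<longrightarrow> y \<in> U) \<and> cball (\<Psi> q) (2 * d) \<subseteq> B"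
  proof
    fix q assume "q \<in> K"
    with assms obtain d where "d > 0" "\<forall>y\<in>S. dist (\<Psi> y) (\<Psi> q) < d \<longrightarrow> y \<in> U" "cball (\<Psi> q) d \<subseteq> B"
      using coordinate_ball_separation[OF continuous_on_subset[OF assms(1)], of S B q U] by blast
    then show "\<exists>d>0. (\<forall>y\<in>S. dist (\<Psi> y) (\<Psi> q) < 2 * d \<longrightarrow> y \<in> U) \<and> cball (\<Psi> q) (2 * d) \<subseteq> B"
      by (intro exI[of _ "d / 2"]) auto
  qed
  then obtain \<delta> where \<delta>: "\<forall>q\<in>K. \<delta> q > 0 \<and> (\<forall>y\<in>S. dist (\<Psi> y) (\<Psi> q) < 2 * \<delta> q \<longrightarrow> y \<in> U) \<and>
      cball (\<Psi> q) (2 * \<delta> q) \<subseteq> B"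
    by metis
  have cover: "K \<subseteq> (\<Union>q\<in>K. \<Psi> -` ball (\<Psi> q) (\<delta> q))"
    using \<delta> by auto
  have "open (\<Psi> -` ball (\<Psi> q) (\<delta> q))" for q
    using assms(1) by (simp add: open_vimage)
  then obtain T where "T \<subseteq> K" "finite T" "K \<subseteq> (\<Union>q\<in>T. \<Psi> -` ball (\<Psi> q) (\<delta> q))"
    by (rule compactE_image[OF assms(5) _ cover])
  with \<delta> show thesis
    by (intro that[of T \<delta>]) auto
qed

lemma power_le_powr_power:
  fixes f e :: real
  assumes "0 \<le> f" "f \<le> 1" "0 < e" "real k * e \<le> real m" "0 < k"
  shows "f ^ m \<le> (f ^ k) powr e"
proof (cases "f = 0")
  case True
  have "0 < real k * e" using assms by simp
  then show ?thesis
    using True assms(4) by (simp add: power_0_left)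
next
  case False
  then have "0 < f" using assms by simp
  then show ?thesis
    using powr_mono'[OF assms(4)] assms by (simp add: powr_powr powr_realpow[symmetric])
qed

lemma grad_laplacian_power_le:
  assumes f: "C2_derivs f g H" and fx: "0 \<le> f x" "f x \<le> 1" and "2 \<le> k"
    and g: "norm (g x) \<le> M1" and H: "\<bar>\<Sum>i\<in>UNIV. H x i $ i\<bar> \<le> M2"
  defines "C \<equiv> real k * M1 + real k * real (k - 1) * M1\<^sup>2 + real k * M2"
  shows "norm (grad (\<lambda>x. f x ^ k) x) \<le> C * f x ^ (k - 1)"
    and "\<bar>laplacian (\<lambda>x. f x ^ k) x\<bar> \<le> C * f x ^ (k - 2)"
proof -
  note fk = C2_derivs_compose[OF C2_derivs_real_power[of k] f]
  have M: "0 \<le> M1" "0 \<le> M2"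
    using g H by (auto intro: order_trans[OF norm_ge_zero] order_trans[OF abs_ge_zero])
  have "norm (grad (\<lambda>x. f x ^ k) x) = real k * f x ^ (k - 1) * norm (g x)"
    unfolding C2_derivs_grad[OF fk] using fx by simp
  also have "\<dots> \<le> real k * f x ^ (k - 1) * M1"
    using g fx by (intro mult_left_mono) auto
  also have "\<dots> \<le> C * f x ^ (k - 1)"
    unfolding C_def using M fx by (simp add: algebra_simps)
  finally show "norm (grad (\<lambda>x. f x ^ k) x) \<le> C * f x ^ (k - 1)" .
  have "f x ^ (k - 1) \<le> f x ^ (k - 2)"
    using fx \<open>2 \<le> k\<close> by (intro power_decreasing) auto
  have "laplacian (\<lambda>x. f x ^ k) x = real k * real (k - 1) * f x ^ (k - 2) * (g x \<bullet> g x)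
      + real k * f x ^ (k - 1) * (\<Sum>i\<in>UNIV. H x i $ i)"
    unfolding C2_derivs_laplacian[OF fk] inner_vec_def
    by (simp add: sum.distrib sum_distrib_left algebra_simps numeral_2_eq_2)
  also have "\<bar>\<dots>\<bar> \<le> real k * real (k - 1) * f x ^ (k - 2) * M1\<^sup>2 + real k * f x ^ (k - 2) * M2"
  proof -
    have "g x \<bullet> g x \<le> M1\<^sup>2"
      using g by (simp add: power_mono flip: power2_norm_eq_inner)
    then have "\<bar>real k * real (k - 1) * f x ^ (k - 2) * (g x \<bullet> g x)\<bar>
        \<le> real k * real (k - 1) * f x ^ (k - 2) * M1\<^sup>2"
      using fx by (simp add: abs_mult mult_left_mono)
    moreover have "\<bar>real k * f x ^ (k - 1) * (\<Sum>i\<in>UNIV. H x i $ i)\<bar> \<le> real k * f x ^ (k - 2) * M2"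
      using fx H \<open>f x ^ (k - 1) \<le> f x ^ (k - 2)\<close> by (simp add: abs_mult mult_mono)
    ultimately show ?thesis by (smt (verit) abs_triangle_ineq)
  qed
  also have "\<dots> \<le> C * f x ^ (k - 2)"
    unfolding C_def using M fx by (simp add: algebra_simps)
  finally show "\<bar>laplacian (\<lambda>x. f x ^ k) x\<bar> \<le> C * f x ^ (k - 2)" .
qed

lemma C2_power_derivative_bounds:
  assumes f: "C2_derivs f g H" and "compact S" and f01: "\<And>x. 0 \<le> f x \<and> f x \<le> 1"
    and \<eta>: "0 < \<eta>" "\<eta> < 1/2"
  obtains k C where "0 < k" "0 < C"
    "\<And>x. x \<in> S \<Longrightarrow> norm (grad (\<lambda>x. f x ^ k) x) \<le> C * (f x ^ k) powr (1 - \<eta>)"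
    "\<And>x. x \<in> S \<Longrightarrow> \<bar>laplacian (\<lambda>x. f x ^ k) x\<bar> \<le> C * (f x ^ k) powr (1 - 2 * \<eta>)"
proof -
  define j where "j = nat \<lceil>1 / \<eta>\<rceil>"
  define k where "k = j + 2"
  have "1 / \<eta> \<le> real j" unfolding j_def by linarith
  then have j\<eta>: "1 \<le> real j * \<eta>" using \<eta> by (simp add: field_simps)
  have "bounded (g ` S)"
    using assms(2) C2_derivs_continuous_grad[OF f]
    by (intro compact_imp_bounded compact_continuous_image) (auto intro: continuous_on_subset)
  then obtain M1 where M1: "M1 > 0" "\<And>x. x \<in> S \<Longrightarrow> norm (g x) \<le> M1"
    unfolding bounded_pos by auto
  have "continuous_on UNIV (\<lambda>x. \<Sum>i\<in>UNIV. H x i $ i)"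
    using f unfolding C2_derivs_def by (intro continuous_on_sum continuous_on_component) auto
  then have "bounded ((\<lambda>x. \<Sum>i\<in>UNIV. H x i $ i) ` S)"
    using assms(2) by (intro compact_imp_bounded compact_continuous_image) (auto intro: continuous_on_subset)
  then obtain M2 where M2: "M2 > 0" "\<And>x. x \<in> S \<Longrightarrow> \<bar>\<Sum>i\<in>UNIV. H x i $ i\<bar> \<le> M2"
    unfolding bounded_pos by auto
  define C where "C = real k * M1 + real k * real (k - 1) * M1\<^sup>2 + real k * M2"
  have "0 < C" unfolding C_def k_def using M1 M2 by (simp add: add_pos_nonneg)
  moreover have "norm (grad (\<lambda>x. f x ^ k) x) \<le> C * (f x ^ k) powr (1 - \<eta>)"
    and "\<bar>laplacian (\<lambda>x. f x ^ k) x\<bar> \<le> C * (f x ^ k) powr (1 - 2 * \<eta>)" if x: "x \<in> S" for x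
  proof -
    have fx: "0 \<le> f x" "f x \<le> 1" using f01 by auto
    have "f x ^ (k - 1) \<le> (f x ^ k) powr (1 - \<eta>)" and "f x ^ (k - 2) \<le> (f x ^ k) powr (1 - 2 * \<eta>)"
      unfolding k_def using j\<eta> \<eta> fx by (intro power_le_powr_power; simp add: algebra_simps)+
    then show "norm (grad (\<lambda>x. f x ^ k) x) \<le> C * (f x ^ k) powr (1 - \<eta>)"
      and "\<bar>laplacian (\<lambda>x. f x ^ k) x\<bar> \<le> C * (f x ^ k) powr (1 - 2 * \<eta>)"
      using grad_laplacian_power_le[OF f fx _ M1(2)[OF x] M2(2)[OF x], of k] \<open>0 < C\<close>
      unfolding C_def[symmetric] by (auto simp: k_def intro: order_trans mult_left_mono)
  qed
  ultimately show thesis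
    by (intro that[of k C]) (auto simp: k_def)
qed

definition neumann_cutoff ::
    "(real^2) set \<Rightarrow> (real^2) set \<Rightarrow> (real^2) set \<Rightarrow> real \<Rightarrow> (real^2 \<Rightarrow> real) \<Rightarrow> real \<Rightarrow> bool"
  where "neumann_cutoff G K V \<eta> \<phi> C \<longleftrightarrow> C2_closure G \<phi> \<and> C > 0 \<and>
    (\<forall>x\<in>closure G. 0 \<le> \<phi> x \<and> \<phi> x \<le> 1) \<and>
    (\<forall>x\<in>closure G - V. \<phi> x = 0) \<and>
    (\<forall>x\<in>K. \<phi> x = 1) \<and>
    (\<forall>x\<in>frontier G. grad \<phi> x \<bullet> outer_normal G x = 0) \<and>
    (\<forall>x\<in>closure G. norm (grad \<phi> x) \<le> C * \<phi> x powr (1 - \<eta>) \<and>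
                     \<bar>laplacian \<phi> x\<bar> \<le> C * \<phi> x powr (1 - 2 * \<eta>))"

definition admits_neumann_cutoffs :: "(real^2) set \<Rightarrow> (real^2) set \<Rightarrow> bool"
  where "admits_neumann_cutoffs G W \<longleftrightarrow> openin (top_of_set (closure G)) W \<and>
    (\<forall>K V \<eta>. compact K \<and> K \<subseteq> W \<and> openin (top_of_set W) V \<and> K \<subseteq> V \<and> 0 < \<eta> \<and> \<eta> < 1/2 \<longrightarrow>
       (\<exists>\<phi> C. neumann_cutoff G K V \<eta> \<phi> C))"

lemma neumann_cutoff_power:
  assumes "bounded G" and f: "C2_neumann {(y, outer_normal G y) | y. y \<in> frontier G} f"
    and f01: "\<And>x. 0 \<le> f x \<and> f x \<le> 1"
    and "\<And>x. x \<in> closure G - V \<Longrightarrow> f x = 0" and "\<And>x. x \<in> K \<Longrightarrow> f x = 1"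
    and "0 < \<eta>" "\<eta> < 1/2"
  shows "\<exists>\<phi> C. neumann_cutoff G K V \<eta> \<phi> C"
proof -
  obtain g H where fd: "C2_derivs f g H"
    using f unfolding C2_neumann_def C2_everywhere_def by blast
  obtain k C where k: "0 < k" "0 < C"
    and bounds: "\<And>x. x \<in> closure G \<Longrightarrow> norm (grad (\<lambda>x. f x ^ k) x) \<le> C * (f x ^ k) powr (1 - \<eta>)"
      "\<And>x. x \<in> closure G \<Longrightarrow> \<bar>laplacian (\<lambda>x. f x ^ k) x\<bar> \<le> C * (f x ^ k) powr (1 - 2 * \<eta>)"
    using C2_power_derivative_bounds[OF fd compact_closure[THEN iffD2, OF \<open>bounded G\<close>] f01 \<open>0 < \<eta>\<close> \<open>\<eta> < 1/2\<close>]
    by blast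
  note fk = C2_derivs_compose[OF C2_derivs_real_power[of k] fd]
  have "C2_neumann {(y, outer_normal G y) | y. y \<in> frontier G} (\<lambda>x. f x ^ k)"
    by (rule C2_neumann_compose[OF C2_derivs_real_power f])
  then have "grad (\<lambda>x. f x ^ k) y \<bullet> outer_normal G y = 0" if "y \<in> frontier G" for y
    using that unfolding C2_neumann_def C2_derivs_grad[OF fk]
      C2_derivs_frechet_derivative[OF fk, symmetric] by blast
  moreover have "C2_closure G (\<lambda>x. f x ^ k)"
    unfolding C2_closure_def using C2_derivs_imp_C2_on[OF fk] by blast
  ultimately show ?thesis
    unfolding neumann_cutoff_def using assms k bounds
    by (intro exI[of _ "\<lambda>x. f x ^ k"] exI[of _ C]) (auto intro: power_le_one)
qed

lemma C2_derivs_real_affine: "C2_derivs_real (\<lambda>t. a * t + b) (\<lambda>t. a) (\<lambda>t. 0)"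
  unfolding C2_derivs_real_def by (auto intro!: derivative_eq_intros)

lemma C2_derivs_real_shifted_square: "C2_derivs_real (\<lambda>t. (t - a)\<^sup>2) (\<lambda>t. 2 * (t - a)) (\<lambda>t. 2)"
  unfolding C2_derivs_real_def by (auto intro!: derivative_eq_intros)

lemma C2_neumann_dist_sq:
  fixes \<Psi> :: "real^2 \<Rightarrow> real \<times> real"
  assumes "C2_neumann A (\<lambda>x. fst (\<Psi> x))" "C2_neumann A (\<lambda>x. snd (\<Psi> x))"
  shows "C2_neumann A (\<lambda>x. (dist (\<Psi> x) c)\<^sup>2)"
proof -
  have "(dist (\<Psi> x) c)\<^sup>2 = (fst (\<Psi> x) - fst c)\<^sup>2 + (snd (\<Psi> x) - snd c)\<^sup>2" for x
    by (simp add: dist_prod_def dist_real_def)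
  then show ?thesis
    using assms by (simp add: C2_neumann_add C2_neumann_compose[OF C2_derivs_real_shifted_square])
qed

definition bump :: "'a::metric_space \<Rightarrow> real \<Rightarrow> 'a \<Rightarrow> real"
  where "bump c \<delta> z = smoothstep (2 - (dist z c)\<^sup>2 / \<delta>\<^sup>2)"

lemma bump_eq_1: "0 < \<delta> \<Longrightarrow> dist z c < \<delta> \<Longrightarrow> bump c \<delta> z = 1"
  unfolding bump_def
  by (intro smoothstep_ge1) (simp add: field_simps power_strict_mono)

lemma bump_argument_nonpos:
  assumes "0 < \<delta>" "2 * \<delta> \<le> dist z c"
  shows "2 - (dist z c)\<^sup>2 / \<delta>\<^sup>2 \<le> 0"
proof -
  have "2 * \<delta>\<^sup>2 \<le> (2 * \<delta>)\<^sup>2" by (simp add: power_mult_distrib)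
  also have "\<dots> \<le> (dist z c)\<^sup>2" using assms by (intro power_mono) auto
  finally show ?thesis using assms(1) by (simp add: field_simps)
qed

lemma bump_nonneg: "0 \<le> bump c \<delta> z"
  using smoothstep_bounds unfolding bump_def by blast

lemma C2_neumann_bump_argument:
  fixes \<Psi> :: "real^2 \<Rightarrow> real \<times> real"
  assumes "C2_neumann A (\<lambda>x. fst (\<Psi> x))" "C2_neumann A (\<lambda>x. snd (\<Psi> x))"
  shows "C2_neumann A (\<lambda>x. 2 - (dist (\<Psi> x) c)\<^sup>2 / \<delta>\<^sup>2)"
  using C2_neumann_compose[OF C2_derivs_real_affine[where a = "- 1 / \<delta>\<^sup>2" and b = 2]
      C2_neumann_dist_sq[OF assms]]
  by (simp add: algebra_simps)

lemma smoothstep_bump_sum_eq_0: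
  assumes "\<forall>q\<in>T. 0 < \<delta> q \<and> 2 * \<delta> q \<le> dist z (c q)"
  shows "smoothstep (\<Sum>q\<in>T. bump (c q) (\<delta> q) z) = 0"
proof -
  have "bump (c q) (\<delta> q) z = 0" if "q \<in> T" for q
    using assms that unfolding bump_def by (intro smoothstep_nonpos bump_argument_nonpos) auto
  then show ?thesis by (simp add: smoothstep_nonpos)
qed

lemma smoothstep_bump_sum_eq_1:
  assumes "finite T" "q \<in> T" "0 < \<delta> q" "dist z (c q) < \<delta> q"
  shows "smoothstep (\<Sum>q\<in>T. bump (c q) (\<delta> q) z) = 1"
proof -
  have "bump (c q) (\<delta> q) z \<le> (\<Sum>q\<in>T. bump (c q) (\<delta> q) z)"
    using assms(1,2) by (intro member_le_sum bump_nonneg)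
  then show ?thesis
    using bump_eq_1[OF assms(3,4)] by (intro smoothstep_ge1) simp
qed

text \<open>Boundary points mapped outside \<open>B\<close> need no Neumann condition on \<open>\<Psi>\<close>: there every bump
  is identically zero to first order.\<close>
lemma C2_neumann_bump_sum:
  fixes G :: "(real^2) set" and B :: "(real \<times> real) set" and \<Psi> :: "real^2 \<Rightarrow> real \<times> real"
  defines "A \<equiv> {(y, outer_normal G y) | y. y \<in> frontier G \<and> \<Psi> y \<in> B}"
  assumes \<Psi>: "C2_neumann A (\<lambda>x. fst (\<Psi> x))" "C2_neumann A (\<lambda>x. snd (\<Psi> x))"
    and T: "finite T" "\<forall>q\<in>T. 0 < \<delta> q" "\<forall>q\<in>T. cball (\<Psi> q) (2 * \<delta> q) \<subseteq> B"
  shows "C2_neumann {(y, outer_normal G y) | y. y \<in> frontier G}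
    (\<lambda>x. smoothstep (\<Sum>q\<in>T. bump (\<Psi> q) (\<delta> q) (\<Psi> x)))"
proof -
  define A' where "A' = {(y, n :: real^2). y \<in> frontier G \<and> \<Psi> y \<notin> B}"
  have "C2_neumann (A \<union> A') (\<lambda>x. bump (\<Psi> q) (\<delta> q) (\<Psi> x))" if q: "q \<in> T" for q
    unfolding bump_def
  proof (rule C2_neumann_Un)
    show "C2_neumann A (\<lambda>x. smoothstep (2 - (dist (\<Psi> x) (\<Psi> q))\<^sup>2 / (\<delta> q)\<^sup>2))"
      by (intro C2_neumann_compose[OF C2_derivs_real_smoothstep] C2_neumann_bump_argument \<Psi>)
    show "C2_neumann A' (\<lambda>x. smoothstep (2 - (dist (\<Psi> x) (\<Psi> q))\<^sup>2 / (\<delta> q)\<^sup>2))"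
    proof (rule C2_neumann_compose_flat[OF C2_derivs_real_smoothstep
          C2_neumann_imp_C2_everywhere[OF C2_neumann_bump_argument[OF \<Psi>]]])
      fix y n assume "(y, n) \<in> A'"
      then have "\<Psi> y \<notin> B"
        unfolding A'_def by blast
      then have "\<Psi> y \<notin> cball (\<Psi> q) (2 * \<delta> q)"
        using T(3) q by blast
      then show "smoothstep' (2 - (dist (\<Psi> y) (\<Psi> q))\<^sup>2 / (\<delta> q)\<^sup>2) = 0"
        using T(2) q by (intro smoothstep'_nonpos bump_argument_nonpos) (auto simp: dist_commute)
    qed
  qed
  then have "C2_neumann (A \<union> A') (\<lambda>x. smoothstep (\<Sum>q\<in>T. bump (\<Psi> q) (\<delta> q) (\<Psi> x)))"
    by (intro C2_neumann_compose[OF C2_derivs_real_smoothstep] C2_neumann_sum T(1))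
  moreover have "{(y, outer_normal G y) | y. y \<in> frontier G} \<subseteq> A \<union> A'"
    unfolding A_def A'_def by auto
  ultimately show ?thesis
    unfolding C2_neumann_def by blast
qed

lemma admits_neumann_cutoffs_from_coordinates:
  fixes G :: "(real^2) set" and B :: "(real \<times> real) set" and \<Psi> :: "real^2 \<Rightarrow> real \<times> real"
  defines "A \<equiv> {(y, outer_normal G y) | y. y \<in> frontier G \<and> \<Psi> y \<in> B}"
  assumes G: "bounded G" and B: "open B" and inj: "inj_on \<Psi> (closure G \<inter> \<Psi> -` B)"
    and \<Psi>: "C2_neumann A (\<lambda>x. fst (\<Psi> x))" "C2_neumann A (\<lambda>x. snd (\<Psi> x))"
  shows "admits_neumann_cutoffs G (closure G \<inter> \<Psi> -` B)"
proof -
  define W where "W = closure G \<inter> \<Psi> -` B"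
  have "continuous_on UNIV (\<lambda>x. fst (\<Psi> x))" "continuous_on UNIV (\<lambda>x. snd (\<Psi> x))"
    using \<Psi> C2_derivs_continuous unfolding C2_neumann_def C2_everywhere_def by blast+
  then have cont: "continuous_on UNIV \<Psi>"
    using continuous_on_Pair by fastforce
  have "openin (top_of_set (closure G)) W"
    unfolding W_def openin_open using open_vimage[OF B cont] by blast
  moreover have "\<exists>\<phi> C. neumann_cutoff G K V \<eta> \<phi> C"
    if K: "compact K" "K \<subseteq> W" and V: "openin (top_of_set W) V" "K \<subseteq> V" and \<eta>: "0 < \<eta>" "\<eta> < 1/2"
    for K V \<eta>
  proof -
    obtain U where U: "open U" "V = W \<inter> U"
      using V(1) unfolding openin_open by blast
    have "K \<subseteq> U"
      using V(2) U(2) by blast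
    obtain T \<delta> where T: "finite T" "T \<subseteq> K" "\<forall>q\<in>T. 0 < \<delta> q"
      "K \<subseteq> (\<Union>q\<in>T. \<Psi> -` ball (\<Psi> q) (\<delta> q))"
      "\<forall>q\<in>T. \<forall>y\<in>closure G. dist (\<Psi> y) (\<Psi> q) < 2 * \<delta> q \<longrightarrow> y \<in> U"
      "\<forall>q\<in>T. cball (\<Psi> q) (2 * \<delta> q) \<subseteq> B"
      by (rule finite_coordinate_cover[OF cont compact_closure[THEN iffD2, OF G] B inj K(1)
            K(2)[unfolded W_def] U(1) \<open>K \<subseteq> U\<close>])
    define f where "f x = smoothstep (\<Sum>q\<in>T. bump (\<Psi> q) (\<delta> q) (\<Psi> x))" for x
    have f_neumann: "C2_neumann {(y, outer_normal G y) | y. y \<in> frontier G} f"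
      unfolding f_def[abs_def] using \<Psi> T(1,3,6) unfolding A_def by (rule C2_neumann_bump_sum)
    have f_zero: "f x = 0" if x: "x \<in> closure G - V" for x
    proof -
      have "2 * \<delta> q \<le> dist (\<Psi> x) (\<Psi> q)" if q: "q \<in> T" for q
      proof (cases "x \<in> W")
        case True
        then show ?thesis using T(5) q x U(2) by force
      next
        case False
        then have "\<Psi> x \<notin> B" using x unfolding W_def by blast
        then have "\<Psi> x \<notin> cball (\<Psi> q) (2 * \<delta> q)" using T(6) q by blast
        then show ?thesis by (simp add: dist_commute)
      qed
      then show ?thesis
        unfolding f_def using T(3) by (intro smoothstep_bump_sum_eq_0) auto
    qed
    have f_one: "f x = 1" if "x \<in> K" for x
    proof -
      obtain q where "q \<in> T" "dist (\<Psi> x) (\<Psi> q) < \<delta> q"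
        using T(4) \<open>x \<in> K\<close> by (auto simp: dist_commute)
      then show ?thesis
        unfolding f_def using T(1,3) by (intro smoothstep_bump_sum_eq_1) auto
    qed
    have f01: "0 \<le> f x \<and> f x \<le> 1" for x
      unfolding f_def by (rule smoothstep_bounds)
    show ?thesis
      by (rule neumann_cutoff_power[OF G f_neumann f01 f_zero f_one \<eta>])
  qed
  ultimately show ?thesis
    unfolding admits_neumann_cutoffs_def W_def by blast
qed

definition vec2 :: "real \<Rightarrow> real \<Rightarrow> real^2" where "vec2 x y = x *\<^sub>R axis 1 1 + y *\<^sub>R axis 2 1"

lemma vec2_nth [simp]: "vec2 x y $ 1 = x" "vec2 x y $ 2 = y"
  unfolding vec2_def by (auto simp: axis_def)

lemma vec2_eta: "z = vec2 (z $ 1) (z $ 2)"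
  unfolding vec_eq_iff using exhaust_2 by (metis vec2_nth)

lemma inner_real2: "v \<bullet> w = v $ 1 * w $ 1 + v $ 2 * w $ 2" for v w :: "real^2"
  unfolding inner_vec_def sum_2 by simp

lemma norm_real2: "norm v = sqrt ((v $ 1)\<^sup>2 + (v $ 2)\<^sup>2)" for v :: "real^2"
  unfolding norm_eq_sqrt_inner inner_real2 by (simp add: power2_eq_square)

lemma norm_le_abs_nth_sum_real2: "norm v \<le> \<bar>v $ 1\<bar> + \<bar>v $ 2\<bar>" for v :: "real^2"
  using norm_le_l1_cart[of v] by (simp add: sum_2)

section \<open>Boundary charts\<close>

locale boundary_chart =
  fixes G :: "(real^2) set" and p :: "real^2" and r :: real and Q :: "real^2 \<Rightarrow> real^2"
    and h h' h'' :: "real \<Rightarrow> real"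
  assumes open_G: "open G" and r_pos: "0 < r" and Q: "orthogonal_transformation Q"
    and h: "C2_derivs_real h h' h''"
    and chart: "G \<inter> ball p r = {x \<in> ball p r. (Q (x - p)) $ 2 < h ((Q (x - p)) $ 1)}"
    and p_frontier: "p \<in> frontier G"
begin

definition Y1 :: "real^2 \<Rightarrow> real" where "Y1 x = (Q (x - p)) $ 1"
definition Y2 :: "real^2 \<Rightarrow> real" where "Y2 x = (Q (x - p)) $ 2"

lemma Q_linear: "linear Q" using Q orthogonal_transformation_linear by blast
lemma Q_inner: "Q v \<bullet> Q w = v \<bullet> w" using Q unfolding orthogonal_transformation_def by blast
lemma norm_Q: "norm (Q v) = norm v" using Q orthogonal_transformation_norm by blast
lemma Q_inv: "Q (inv Q v) = v" using Q orthogonal_transformation_surj surj_f_inv_f by metis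

lemma Q_eq_0_iff: "Q v = 0 \<longleftrightarrow> v = 0"
  using norm_Q[of v] by (metis norm_eq_zero)

lemma nth_Q_eq_inner: "(Q z) $ i = inv Q (axis i 1) \<bullet> z"
  by (metis Q_inner Q_inv cart_eq_inner_axis inner_commute)

lemma Q_diff: "Q (q - y) = vec2 (Y1 q - Y1 y) (Y2 q - Y2 y)"
proof -
  have "Q (q - y) = Q (q - p) - Q (y - p)" by (simp add: linear_diff[OF Q_linear, symmetric])
  then show ?thesis by (subst vec2_eta) (simp add: Y1_def Y2_def)
qed

lemma norm_diff_le_Y: "norm (x - p) \<le> \<bar>Y1 x\<bar> + \<bar>Y2 x\<bar>"
  using norm_le_abs_nth_sum_real2[of "Q (x - p)"] by (simp add: norm_Q Y1_def Y2_def)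

lemma Y_p: "Y1 p = 0" "Y2 p = 0"
  unfolding Y1_def Y2_def using linear_0[OF Q_linear] by auto

lemma C2_derivs_Y1: "C2_derivs Y1 (\<lambda>x. inv Q (axis 1 1)) (\<lambda>x i. 0)"
proof -
  have "Y1 = (\<lambda>x. inv Q (axis 1 1) \<bullet> x + - (inv Q (axis 1 1) \<bullet> p))"
    by (auto simp: Y1_def nth_Q_eq_inner inner_diff_right)
  then show ?thesis using C2_derivs_affine by metis
qed

lemma C2_derivs_Y2: "C2_derivs Y2 (\<lambda>x. inv Q (axis 2 1)) (\<lambda>x i. 0)"
proof -
  have "Y2 = (\<lambda>x. inv Q (axis 2 1) \<bullet> x + - (inv Q (axis 2 1) \<bullet> p))"
    by (auto simp: Y2_def nth_Q_eq_inner inner_diff_right)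
  then show ?thesis using C2_derivs_affine by metis
qed

lemma h_deriv: "(h has_real_derivative h' t) (at t)"
  and h'_deriv: "(h' has_real_derivative h'' t) (at t)"
  using h unfolding C2_derivs_real_def by blast+

lemma continuous_on_h: "continuous_on UNIV h"
  using h_deriv by (intro continuous_at_imp_continuous_on ballI DERIV_isCont)

lemma continuous_on_h': "continuous_on UNIV h'"
  using h'_deriv by (intro continuous_at_imp_continuous_on ballI DERIV_isCont)

lemma mem_G_iff: "x \<in> ball p r \<Longrightarrow> x \<in> G \<longleftrightarrow> Y2 x < h (Y1 x)"
  using chart unfolding Y1_def Y2_def by blast

lemma closure_below_graph:
  assumes "x \<in> closure G" "x \<in> ball p r"
  shows "Y2 x \<le> h (Y1 x)"
proof -
  have "closed {x. Y2 x \<le> h (Y1 x)}"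
    using C2_derivs_continuous[OF C2_derivs_Y1] C2_derivs_continuous[OF C2_derivs_Y2]
    by (intro closed_Collect_le continuous_on_compose2[OF continuous_on_h]) auto
  moreover have "G \<inter> ball p r \<subseteq> {x. Y2 x \<le> h (Y1 x)}"
    using mem_G_iff by auto
  ultimately have "closure (ball p r \<inter> G) \<subseteq> {x. Y2 x \<le> h (Y1 x)}"
    by (metis Int_commute closure_minimal)
  moreover have "x \<in> closure (ball p r \<inter> G)"
    using open_Int_closure_subset[OF open_ball, of p r G] assms by auto
  ultimately show ?thesis by auto
qed

lemma frontier_on_graph:
  assumes "y \<in> frontier G" "y \<in> ball p r"
  shows "Y2 y = h (Y1 y)"
proof -
  have "y \<in> closure G" "y \<notin> G"
    using assms(1) frontier_disjoint_eq open_G unfolding frontier_def by blast+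
  then show ?thesis
    using closure_below_graph[of y] mem_G_iff[OF assms(2)] assms(2) by fastforce
qed

lemma h_0: "h 0 = 0"
  using frontier_on_graph[OF p_frontier] r_pos Y_p by simp

lemma graph_in_frontier:
  assumes z: "z \<in> ball p r" "Y2 z = h (Y1 z)"
  shows "z \<in> frontier G"
proof -
  have "z \<in> closure G" unfolding closure_approachable
  proof (intro allI impI)
    fix e :: real assume "e > 0"
    define \<rho> where "\<rho> = min (e/2) ((r - dist p z)/2)"
    have \<rho>: "\<rho> > 0" "\<rho> < e" "\<rho> < r - dist p z"
      using \<open>e > 0\<close> z(1) unfolding \<rho>_def by (auto simp: min_def)
    define y where "y = z - \<rho> *\<^sub>R inv Q (axis 2 1)"
    have Qy: "Q (y - p) = Q (z - p) - \<rho> *\<^sub>R axis 2 1"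
    proof -
      have "y - p = (z - p) - \<rho> *\<^sub>R inv Q (axis 2 1)" by (simp add: y_def algebra_simps)
      then show ?thesis by (simp add: linear_diff[OF Q_linear] linear_scale[OF Q_linear] Q_inv)
    qed
    have dy: "dist y z = \<rho>"
      using norm_Q[of "inv Q (axis 2 1)"] \<rho> by (simp add: y_def dist_norm Q_inv)
    then have "y \<in> ball p r"
      using dist_triangle[of p y z] \<rho> by (simp add: dist_commute)
    moreover have "Y1 y = Y1 z" "Y2 y = Y2 z - \<rho>"
      unfolding Y1_def Y2_def Qy by (auto simp: axis_def)
    ultimately have "y \<in> G" using mem_G_iff z(2) \<rho> by simp
    then show "\<exists>y\<in>G. dist y z < e" using dy \<rho> by auto
  qed
  moreover have "z \<notin> G" using mem_G_iff[OF z(1)] z(2) by simp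
  ultimately show ?thesis unfolding frontier_def using interior_open[OF open_G] by auto
qed

definition graph_normal :: "real^2 \<Rightarrow> real^2"
  where "graph_normal y = inv Q ((1 / sqrt (1 + (h' (Y1 y))\<^sup>2)) *\<^sub>R vec2 (- h' (Y1 y)) 1)"

lemma Q_graph_normal: "Q (graph_normal y) = (1 / sqrt (1 + (h' (Y1 y))\<^sup>2)) *\<^sub>R vec2 (- h' (Y1 y)) 1"
  by (simp add: graph_normal_def Q_inv)

lemma norm_graph_normal: "norm (graph_normal y) = 1"
proof -
  have "norm (vec2 (- h' (Y1 y)) 1) = sqrt (1 + (h' (Y1 y))\<^sup>2)"
    by (simp add: norm_real2 add.commute)
  moreover have "0 < sqrt (1 + (h' (Y1 y))\<^sup>2)"
    by (simp add: add_pos_nonneg)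
  ultimately have "norm (Q (graph_normal y)) = 1"
    by (simp add: Q_graph_normal)
  then show ?thesis by (simp add: norm_Q)
qed

lemma inner_graph_normal:
  "(q - y) \<bullet> graph_normal y = ((Y2 q - Y2 y) - h' (Y1 y) * (Y1 q - Y1 y)) / sqrt (1 + (h' (Y1 y))\<^sup>2)"
proof -
  have "(q - y) \<bullet> graph_normal y = Q (q - y) \<bullet> Q (graph_normal y)"
    by (simp only: Q_inner)
  also have "\<dots> = vec2 (Y1 q - Y1 y) (Y2 q - Y2 y) \<bullet>
      ((1 / sqrt (1 + (h' (Y1 y))\<^sup>2)) *\<^sub>R vec2 (- h' (Y1 y)) 1)"
    by (simp only: Q_diff Q_graph_normal)
  also have "\<dots> = ((Y2 q - Y2 y) - h' (Y1 y) * (Y1 q - Y1 y)) / sqrt (1 + (h' (Y1 y))\<^sup>2)"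
    using add_pos_nonneg[of 1 "(h' (Y1 y))\<^sup>2"] by (simp add: inner_real2 field_simps)
  finally show ?thesis .
qed

lemma Y_along_graph_normal:
  "vec2 (Y1 (y - t *\<^sub>R graph_normal y) - Y1 y) (Y2 (y - t *\<^sub>R graph_normal y) - Y2 y)
     = (- t) *\<^sub>R Q (graph_normal y)"
proof -
  have "(y - t *\<^sub>R graph_normal y) - y = (- t) *\<^sub>R graph_normal y" by simp
  then show ?thesis by (metis Q_diff linear_scale[OF Q_linear])
qed

lemma graph_normal_tangent:
  assumes y: "y \<in> frontier G" "y \<in> ball p r"
  shows "((\<lambda>q. ((q - y) \<bullet> graph_normal y) / norm (q - y)) \<longlongrightarrow> 0) (at y within frontier G)"
proof -
  define c where "c = sqrt (1 + (h' (Y1 y))\<^sup>2)"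
  define F' where "F' v = (inv Q (axis 1 1) \<bullet> v) * h' (Y1 y)" for v
  have "(Y1 has_derivative (\<lambda>v. inv Q (axis 1 1) \<bullet> v)) (at y)"
    using C2_derivs_Y1 unfolding C2_derivs_def by blast
  then have "((\<lambda>q. h (Y1 q)) has_derivative F') (at y)"
    unfolding F'_def by (rule DERIV_compose_FDERIV[OF h_deriv])
  then have lim: "((\<lambda>q. norm (h (Y1 q) - h (Y1 y) - F' (q - y)) / norm (q - y)) \<longlongrightarrow> 0)
      (at y within frontier G)"
    unfolding has_derivative_iff_norm by (blast intro: tendsto_within_subset)
  have bound: "\<forall>\<^sub>F q in at y within frontier G.
      norm (((q - y) \<bullet> graph_normal y) / norm (q - y)) \<le> norm (h (Y1 q) - h (Y1 y) - F' (q - y)) / norm (q - y)"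
    unfolding eventually_at_filter using eventually_nhds_in_open[OF open_ball y(2)]
  proof eventually_elim
    case (elim q)
    show ?case
    proof (intro impI)
      assume "q \<in> frontier G"
      then have "(q - y) \<bullet> graph_normal y = (h (Y1 q) - h (Y1 y) - F' (q - y)) / c"
        using frontier_on_graph[OF _ elim] frontier_on_graph[OF y]
        by (simp add: inner_graph_normal F'_def c_def nth_Q_eq_inner[symmetric] Q_diff)
      moreover have "1 \<le> c" unfolding c_def by simp
      ultimately have "\<bar>(q - y) \<bullet> graph_normal y\<bar> \<le> \<bar>h (Y1 q) - h (Y1 y) - F' (q - y)\<bar>"
        by (simp add: abs_divide divide_le_eq mult_le_cancel_left1)
      then show "norm (((q - y) \<bullet> graph_normal y) / norm (q - y))
          \<le> norm (h (Y1 q) - h (Y1 y) - F' (q - y)) / norm (q - y)"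
        by (simp add: abs_divide divide_right_mono)
    qed
  qed
  show ?thesis
    by (rule Lim_null_comparison[OF bound lim])
qed

lemma graph_normal_inward:
  assumes y: "y \<in> frontier G" "y \<in> ball p r"
  shows "\<exists>e>0. \<forall>t. 0 < t \<and> t < e \<longrightarrow> y - t *\<^sub>R graph_normal y \<in> G"
proof -
  define d where "d = h' (Y1 y)"
  define c where "c = sqrt (1 + d\<^sup>2)"
  have c: "0 < c" unfolding c_def by (simp add: add_pos_nonneg)
  have Y: "Y1 (y - t *\<^sub>R graph_normal y) = Y1 y + t * d / c"
    "Y2 (y - t *\<^sub>R graph_normal y) = h (Y1 y) - t / c" for t
    using arg_cong[OF Y_along_graph_normal[of y t], of "\<lambda>v. v $ 1"]
      arg_cong[OF Y_along_graph_normal[of y t], of "\<lambda>v. v $ 2"] frontier_on_graph[OF y]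
    by (simp_all add: Q_graph_normal d_def c_def algebra_simps)
  have Y1_deriv: "((\<lambda>t. Y1 y + t * d / c) has_real_derivative d / c) (at 0)"
    using c by (auto intro!: derivative_eq_intros)
  then have "((\<lambda>t. h (Y1 y + t * d / c)) has_real_derivative h' (Y1 y) * (d / c)) (at 0)"
    using DERIV_chain2[OF h_deriv Y1_deriv] by simp
  then have "((\<lambda>t. h (Y1 y + t * d / c) + t / c) has_real_derivative h' (Y1 y) * (d / c) + 1 / c) (at 0)"
    by (intro DERIV_add DERIV_cdivide[OF DERIV_ident, simplified])
  moreover have "0 < h' (Y1 y) * (d / c) + 1 / c"
  proof -
    have "0 < 1 + d * d" by (simp add: add_pos_nonneg)
    then show ?thesis using c by (simp add: d_def field_simps)
  qed
  ultimately have "\<exists>e>0. \<forall>t>0. t < e \<longrightarrow> h (Y1 y + 0 * d / c) + 0 / c < h (Y1 y + (0 + t) * d / c) + (0 + t) / c"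
    by (rule DERIV_pos_inc_right)
  then obtain e where e: "e > 0" "\<And>t. 0 < t \<Longrightarrow> t < e \<Longrightarrow> h (Y1 y) < h (Y1 y + t * d / c) + t / c"
    by auto
  show ?thesis
  proof (intro exI[of _ "min e (r - dist p y)"] conjI allI impI)
    fix t assume t: "0 < t \<and> t < min e (r - dist p y)"
    have "dist p (y - t *\<^sub>R graph_normal y) \<le> dist p y + t"
      using dist_triangle[of p "y - t *\<^sub>R graph_normal y" y] t norm_graph_normal[of y]
      by (simp add: dist_norm)
    then have "y - t *\<^sub>R graph_normal y \<in> ball p r" using t by simp
    then show "y - t *\<^sub>R graph_normal y \<in> G"
      using mem_G_iff e(2)[of t] t Y by simp
  qed (use e(1) y(2) in simp)
qed

definition graph_curve :: "real^2 \<Rightarrow> real \<Rightarrow> real^2"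
  where "graph_curve y l = y + l *\<^sub>R inv Q (axis 1 1) + (h (Y1 y + l) - h (Y1 y)) *\<^sub>R inv Q (axis 2 1)"

lemma Q_graph_curve: "Q (graph_curve y l - y) = vec2 l (h (Y1 y + l) - h (Y1 y))"
  by (simp add: graph_curve_def vec2_def linear_add[OF Q_linear] linear_scale[OF Q_linear] Q_inv)

lemma Y_graph_curve:
  assumes "y \<in> frontier G" "y \<in> ball p r"
  shows "Y1 (graph_curve y l) = Y1 y + l" "Y2 (graph_curve y l) = h (Y1 y + l)"
  using Q_graph_curve[of y l] Q_diff[of "graph_curve y l" y] frontier_on_graph[OF assms]
  by (simp_all add: vec_eq_iff forall_2)

lemma graph_curve_tendsto: "(graph_curve y \<longlongrightarrow> y) (at 0)"
proof -
  have "((\<lambda>l. h (Y1 y + l)) \<longlongrightarrow> h (Y1 y + 0)) (at 0)"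
    by (intro isCont_tendsto_compose[OF DERIV_isCont[OF h_deriv]] tendsto_intros)
  then have "(graph_curve y \<longlongrightarrow> y + 0 *\<^sub>R inv Q (axis 1 1) + (h (Y1 y + 0) - h (Y1 y)) *\<^sub>R inv Q (axis 2 1)) (at 0)"
    unfolding graph_curve_def[abs_def] by (intro tendsto_intros)
  then show ?thesis by simp
qed

lemma graph_curve_in_frontier:
  assumes y: "y \<in> frontier G" "y \<in> ball p r"
  shows "filterlim (graph_curve y) (at y within frontier G) (at_right 0)"
proof (rule filterlim_at_withinI)
  show "(graph_curve y \<longlongrightarrow> y) (at_right 0)"
    using graph_curve_tendsto filterlim_at_split by blast
  have "\<forall>\<^sub>F l in at_right 0. graph_curve y l \<in> ball p r"
    using topological_tendstoD[OF \<open>(graph_curve y \<longlongrightarrow> y) (at_right 0)\<close> open_ball y(2)] .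
  then show "\<forall>\<^sub>F l in at_right 0. graph_curve y l \<in> frontier G - {y}"
    using eventually_at_right_less[of "0::real"]
  proof eventually_elim
    case (elim l)
    have "graph_curve y l \<noteq> y"
    proof
      assume "graph_curve y l = y"
      then have "vec2 l (h (Y1 y + l) - h (Y1 y)) = 0"
        using Q_graph_curve[of y l] linear_0[OF Q_linear] by simp
      then show False using elim(2) by (metis vec2_nth(1) zero_index less_irrefl)
    qed
    then show ?case
      using graph_in_frontier[OF elim(1)] Y_graph_curve[OF y] by simp
  qed
qed

text \<open>\<open>graph_curve y\<close> runs inside the frontier, so the tangent condition forces \<open>n\<close> to be
  orthogonal to its direction \<open>(1, h')\<close> in the rotated frame.\<close>
lemma tangent_condition_normal_relation:
  assumes y: "y \<in> frontier G" "y \<in> ball p r"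
    and tangent: "((\<lambda>q. ((q - y) \<bullet> n) / norm (q - y)) \<longlongrightarrow> 0) (at y within frontier G)"
  shows "Q n $ 1 + h' (Y1 y) * Q n $ 2 = 0"
proof -
  define m where "m = Q n"
  define D where "D l = (h (Y1 y + l) - h (Y1 y)) / l" for l
  define c where "c = sqrt (1 + (h' (Y1 y))\<^sup>2)"
  have pos: "0 < 1 + (h' (Y1 y))\<^sup>2" by (simp add: add_pos_nonneg)
  then have c: "0 < c" unfolding c_def by simp
  have lim0: "((\<lambda>l. ((graph_curve y l - y) \<bullet> n) / norm (graph_curve y l - y)) \<longlongrightarrow> 0) (at_right 0)"
    using filterlim_compose[OF tangent graph_curve_in_frontier[OF y]] .
  have "(D \<longlongrightarrow> h' (Y1 y)) (at 0)"
    using h_deriv[of "Y1 y"] unfolding DERIV_def D_def .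
  then have "((\<lambda>l. (m $ 1 + D l * m $ 2) / sqrt (1 + (D l)\<^sup>2)) \<longlongrightarrow> (m $ 1 + h' (Y1 y) * m $ 2) / c)
      (at_right 0)"
    unfolding c_def using filterlim_at_split pos
    by (intro tendsto_intros) auto
  moreover have "\<forall>\<^sub>F l in at_right 0. (m $ 1 + D l * m $ 2) / sqrt (1 + (D l)\<^sup>2)
      = ((graph_curve y l - y) \<bullet> n) / norm (graph_curve y l - y)"
    using eventually_at_right_less[of "0::real"]
  proof eventually_elim
    case (elim l)
    have "(graph_curve y l - y) \<bullet> n = Q (graph_curve y l - y) \<bullet> m"
      by (simp only: Q_inner m_def)
    also have "\<dots> = l * m $ 1 + (h (Y1 y + l) - h (Y1 y)) * m $ 2"
      by (simp only: Q_graph_curve inner_real2 vec2_nth)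
    also have "\<dots> = l * (m $ 1 + D l * m $ 2)"
      using elim by (simp add: D_def field_simps)
    finally have "(graph_curve y l - y) \<bullet> n = l * (m $ 1 + D l * m $ 2)" .
    moreover have "norm (graph_curve y l - y) = l * sqrt (1 + (D l)\<^sup>2)"
    proof -
      have "norm (graph_curve y l - y) = norm (vec2 l (h (Y1 y + l) - h (Y1 y)))"
        by (metis norm_Q Q_graph_curve)
      also have "\<dots> = sqrt (l\<^sup>2 * (1 + (D l)\<^sup>2))"
        using elim by (simp add: norm_real2 D_def power_divide field_simps)
      finally have "norm (graph_curve y l - y) = sqrt (l\<^sup>2 * (1 + (D l)\<^sup>2))" .
      then show ?thesis using elim by (simp add: real_sqrt_mult)
    qed
    ultimately show ?case using elim by simp
  qed
  ultimately have "((\<lambda>l. ((graph_curve y l - y) \<bullet> n) / norm (graph_curve y l - y))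
      \<longlongrightarrow> (m $ 1 + h' (Y1 y) * m $ 2) / c) (at_right 0)"
    by (rule Lim_transform_eventually)
  then have "(m $ 1 + h' (Y1 y) * m $ 2) / c = 0"
    using tendsto_unique[OF trivial_limit_at_right_real _ lim0] by blast
  then show ?thesis using c unfolding m_def by simp
qed

lemma outer_normal_relation:
  assumes "y \<in> frontier G" "y \<in> ball p r"
  shows "Q (outer_normal G y) $ 1 + h' (Y1 y) * Q (outer_normal G y) $ 2 = 0"
proof -
  have "\<exists>n. norm n = 1 \<and> ((\<lambda>q. ((q - y) \<bullet> n) / norm (q - y)) \<longlongrightarrow> 0) (at y within frontier G) \<and>
      (\<exists>e>0. \<forall>t. 0 < t \<and> t < e \<longrightarrow> y - t *\<^sub>R n \<in> G)"
    using norm_graph_normal graph_normal_tangent[OF assms] graph_normal_inward[OF assms] by blast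
  then have "((\<lambda>q. ((q - y) \<bullet> outer_normal G y) / norm (q - y)) \<longlongrightarrow> 0) (at y within frontier G)"
    unfolding outer_normal_def by (rule someI2_ex) blast
  then show ?thesis
    by (rule tangent_condition_normal_relation[OF assms])
qed

end

lemma one_plus_square_pos: "0 < 1 + (x::real)\<^sup>2"
  by (simp add: add_pos_nonneg)

lemma one_plus_square_neq_0: "1 + (x::real)\<^sup>2 \<noteq> 0"
  using one_plus_square_pos[of x] by linarith

section \<open>Neumann coordinates near a boundary point\<close>

context boundary_chart
begin

text \<open>On the graph the outer normal is proportional to \<open>(- h', 1)\<close> in the rotated frame
  (\<open>outer_normal_relation\<close>); \<open>W' = h' / (1 + h'\<^sup>2)\<close> is exactly the weight that makes the
  derivative of \<open>s_coord\<close> in that direction vanish.\<close>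

definition slope_weight :: "real \<Rightarrow> real" where "slope_weight v = h' v / (1 + (h' v)\<^sup>2)"

definition slope_weight' :: "real \<Rightarrow> real"
  where "slope_weight' v = h'' v * (1 - (h' v)\<^sup>2) / (1 + (h' v)\<^sup>2)\<^sup>2"

lemma slope_weight_deriv: "(slope_weight has_real_derivative slope_weight' v) (at v)"
  unfolding slope_weight_def[abs_def] slope_weight'_def
  using one_plus_square_pos[of "h' v"]
  by (auto intro!: derivative_eq_intros h'_deriv simp: power2_eq_square field_simps)

lemma continuous_on_slope_weight: "continuous_on UNIV slope_weight"
  using slope_weight_deriv by (intro continuous_at_imp_continuous_on ballI DERIV_isCont)

lemma continuous_on_slope_weight': "continuous_on UNIV slope_weight'"
  using h continuous_on_h' unfolding slope_weight'_def[abs_def] C2_derivs_real_def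
  by (intro continuous_intros) (auto simp: one_plus_square_neq_0)

lemma abs_slope_weight_le: "\<bar>slope_weight v\<bar> \<le> 1/2"
proof -
  have "2 * \<bar>h' v\<bar> \<le> 1 + (h' v)\<^sup>2"
    using zero_le_power2[of "\<bar>h' v\<bar> - 1"] by (simp add: power2_eq_square algebra_simps)
  then show ?thesis
    unfolding slope_weight_def using one_plus_square_pos[of "h' v"] by (simp add: abs_divide field_simps)
qed

definition W :: "real \<Rightarrow> real"
  where "W = (SOME F. \<forall>x. (F has_real_derivative slope_weight x) (at x))"

lemma W_deriv: "(W has_real_derivative slope_weight x) (at x)"
proof -
  have "\<exists>F. \<forall>x::real. -\<infinity> < ereal x \<longrightarrow> ereal x < \<infinity> \<longrightarrow> (F has_vector_derivative slope_weight x) (at x)"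
    using continuous_on_slope_weight
    by (intro einterval_antiderivative) (auto simp: continuous_on_eq_continuous_at)
  then have "\<exists>F. \<forall>x. (F has_real_derivative slope_weight x) (at x)"
    by (auto simp: has_real_derivative_iff_has_vector_derivative)
  from someI_ex[OF this] show ?thesis
    unfolding W_def by blast
qed

lemma C2_derivs_real_W: "C2_derivs_real W slope_weight slope_weight'"
  unfolding C2_derivs_real_def
  using W_deriv slope_weight_deriv continuous_on_slope_weight' by blast

lemma abs_W_diff_le: "\<bar>W (u + \<tau>) - W u\<bar> \<le> \<bar>\<tau>\<bar> / 2"
  using field_differentiable_bound[of UNIV W slope_weight "1/2" "u + \<tau>" u] W_deriv abs_slope_weight_le
  by (auto intro: has_field_derivative_at_within)

definition t_coord :: "real^2 \<Rightarrow> real" where "t_coord x = Y2 x - h (Y1 x)"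

definition s_coord :: "real^2 \<Rightarrow> real" where "s_coord x = Y1 x + (W (Y1 x + t_coord x) - W (Y1 x))"

lemma C2_everywhere_t_coord: "C2_everywhere t_coord"
proof -
  have "C2_everywhere Y1" "C2_everywhere Y2"
    using C2_derivs_Y1 C2_derivs_Y2 unfolding C2_everywhere_def by blast+
  then show ?thesis
    unfolding t_coord_def[abs_def] by (intro C2_everywhere_diff C2_everywhere_compose[OF h])
qed

lemma C2_everywhere_s_coord: "C2_everywhere s_coord"
proof -
  have "C2_everywhere Y1"
    using C2_derivs_Y1 unfolding C2_everywhere_def by blast
  then show ?thesis
    unfolding s_coord_def[abs_def]
    by (intro C2_everywhere_add C2_everywhere_diff C2_everywhere_compose[OF C2_derivs_real_W]
        C2_everywhere_t_coord)
qed

lemma Y1_has_derivative: "(Y1 has_derivative (\<lambda>v. Q v $ 1)) (at y)"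
  using C2_derivs_Y1 unfolding C2_derivs_def nth_Q_eq_inner by blast

lemma Y2_has_derivative: "(Y2 has_derivative (\<lambda>v. Q v $ 2)) (at y)"
  using C2_derivs_Y2 unfolding C2_derivs_def nth_Q_eq_inner by blast

lemma t_coord_has_derivative:
  "(t_coord has_derivative (\<lambda>v. Q v $ 2 - Q v $ 1 * h' (Y1 y))) (at y)"
  unfolding t_coord_def[abs_def]
  by (intro has_derivative_diff Y2_has_derivative DERIV_compose_FDERIV[OF h_deriv Y1_has_derivative])

lemma s_coord_has_derivative:
  "(s_coord has_derivative (\<lambda>v. Q v $ 1 + ((Q v $ 1 + (Q v $ 2 - Q v $ 1 * h' (Y1 y)))
      * slope_weight (Y1 y + t_coord y) - Q v $ 1 * slope_weight (Y1 y)))) (at y)"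
  unfolding s_coord_def[abs_def]
  by (intro has_derivative_add has_derivative_diff Y1_has_derivative t_coord_has_derivative
      DERIV_compose_FDERIV[OF W_deriv])

lemma t_coord_frontier: "y \<in> frontier G \<Longrightarrow> y \<in> ball p r \<Longrightarrow> t_coord y = 0"
  using frontier_on_graph unfolding t_coord_def by simp

lemma s_coord_neumann:
  assumes "y \<in> frontier G" "y \<in> ball p r"
  shows "frechet_derivative s_coord (at y) (outer_normal G y) = 0"
proof -
  define m1 m2 d where "m1 = Q (outer_normal G y) $ 1" and "m2 = Q (outer_normal G y) $ 2"
    and "d = h' (Y1 y)"
  have "m1 = - d * m2"
    using outer_normal_relation[OF assms] unfolding m1_def m2_def d_def by simp
  then have "m1 + ((m1 + (m2 - m1 * d)) * slope_weight (Y1 y) - m1 * slope_weight (Y1 y))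
      = m2 * (slope_weight (Y1 y) * (1 + d\<^sup>2) - d)"
    by (simp add: algebra_simps power2_eq_square)
  also have "slope_weight (Y1 y) * (1 + d\<^sup>2) = d"
    unfolding slope_weight_def d_def using one_plus_square_neq_0 by simp
  finally have "m1 + ((m1 + (m2 - m1 * d)) * slope_weight (Y1 y) - m1 * slope_weight (Y1 y)) = 0"
    by simp
  then show ?thesis
    unfolding frechet_derivative_at[OF s_coord_has_derivative, symmetric]
    using t_coord_frontier[OF assms] by (simp add: m1_def m2_def d_def)
qed

lemma t_coord_sq_flat:
  assumes "y \<in> frontier G" "y \<in> ball p r"
  shows "frechet_derivative (\<lambda>x. (t_coord x)\<^sup>2) (at y) v = 0"
proof -
  have "((\<lambda>x. (t_coord x)\<^sup>2) has_derivative (\<lambda>v. 0)) (at y)"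
    using has_derivative_power[OF t_coord_has_derivative[of y], of 2] t_coord_frontier[OF assms] by simp
  then show ?thesis
    by (metis frechet_derivative_at)
qed

lemma C2_neumann_s_coord:
  "(\<And>y n. (y, n) \<in> A \<Longrightarrow> y \<in> frontier G \<and> y \<in> ball p r \<and> n = outer_normal G y)
    \<Longrightarrow> C2_neumann A s_coord"
  unfolding C2_neumann_def using C2_everywhere_s_coord s_coord_neumann by blast

lemma C2_neumann_t_coord_sq:
  assumes "\<And>y n. (y, n) \<in> A \<Longrightarrow> y \<in> frontier G \<and> y \<in> ball p r"
  shows "C2_neumann A (\<lambda>x. (t_coord x)\<^sup>2)"
proof -
  have "C2_everywhere (\<lambda>x. (t_coord x)\<^sup>2)"
    using C2_everywhere_compose[OF C2_derivs_real_power C2_everywhere_t_coord] .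
  then show ?thesis
    unfolding C2_neumann_def using assms t_coord_sq_flat by blast
qed

text \<open>In \<open>chart_coords_small\<close> below, \<open>\<bar>Y1\<bar> \<le> 3\<alpha>/2\<close> and \<open>\<bar>t_coord\<bar> \<le> \<alpha>\<close>, so all arguments of \<open>h\<close> and
  \<open>slope_weight\<close> that occur stay below \<open>3\<alpha>\<close>, and \<open>\<alpha> \<le> r/8\<close> keeps the point in the chart ball.\<close>
definition chart_scale :: "real \<Rightarrow> bool"
  where "chart_scale \<alpha> \<longleftrightarrow> 0 < \<alpha> \<and> \<alpha> \<le> r / 8 \<and>
    (\<forall>v. \<bar>v\<bar> < 3 * \<alpha> \<longrightarrow> \<bar>h v\<bar> < r / 4 \<and> \<bar>slope_weight v - slope_weight 0\<bar> < 1 / 4)"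

lemma chart_scaleD:
  assumes "chart_scale \<alpha>"
  shows "0 < \<alpha>" "\<alpha> \<le> r / 8"
    and "\<bar>v\<bar> < 3 * \<alpha> \<Longrightarrow> \<bar>h v\<bar> < r / 4"
    and "\<bar>v\<bar> < 3 * \<alpha> \<Longrightarrow> \<bar>slope_weight v - slope_weight 0\<bar> < 1 / 4"
  using assms unfolding chart_scale_def by auto

lemma chart_scale_exists: "\<exists>\<alpha>. chart_scale \<alpha>"
proof -
  have "isCont h 0" "isCont slope_weight 0"
    using h_deriv slope_weight_deriv by (auto intro: DERIV_isCont)
  note eps_delta = this[unfolded continuous_at_eps_delta, rule_format]
  obtain c1 where c1: "0 < c1" "\<And>v. dist v 0 < c1 \<Longrightarrow> dist (h v) (h 0) < r / 4"
    using eps_delta(1)[of "r / 4"] r_pos by auto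
  obtain c2 where c2: "0 < c2" "\<And>v. dist v 0 < c2 \<Longrightarrow> dist (slope_weight v) (slope_weight 0) < 1 / 4"
    using eps_delta(2)[of "1 / 4"] by auto
  show ?thesis
    unfolding chart_scale_def using c1 c2 r_pos h_0
    by (intro exI[of _ "min (min c1 c2 / 3) (r / 8)"]) (auto simp: dist_real_def)
qed

text \<open>Injectivity of \<open>s_coord\<close> on horizontal lines: its derivative in \<open>Y1\<close> is
  \<open>1 + slope_weight (v + \<tau>) - slope_weight v\<close>, which stays positive near the origin.\<close>
lemma W_shift_strict_mono:
  assumes \<alpha>: "chart_scale \<alpha>" and v: "v1 < v2" "\<bar>v1\<bar> \<le> 3 * \<alpha> / 2" "\<bar>v2\<bar> \<le> 3 * \<alpha> / 2"
    and \<tau>: "\<bar>\<tau>\<bar> \<le> \<alpha>"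
  shows "v1 + (W (v1 + \<tau>) - W v1) < v2 + (W (v2 + \<tau>) - W v2)"
proof (rule DERIV_pos_imp_increasing[OF v(1)])
  fix x assume x: "v1 \<le> x" "x \<le> v2"
  have "((\<lambda>v. W (v + \<tau>)) has_real_derivative slope_weight (x + \<tau>) * 1) (at x)"
    by (rule DERIV_chain2[OF W_deriv]) (rule derivative_eq_intros refl | simp)+
  then have "((\<lambda>v. v + (W (v + \<tau>) - W v)) has_real_derivative 1 + (slope_weight (x + \<tau>) - slope_weight x)) (at x)"
    by (intro DERIV_add DERIV_ident DERIV_diff W_deriv) simp
  moreover have "\<bar>x\<bar> < 3 * \<alpha>" "\<bar>x + \<tau>\<bar> < 3 * \<alpha>"
    using x v \<tau> chart_scaleD(1)[OF \<alpha>] by auto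
  then have "\<bar>slope_weight x - slope_weight 0\<bar> < 1 / 4"
    and "\<bar>slope_weight (x + \<tau>) - slope_weight 0\<bar> < 1 / 4"
    by (meson chart_scaleD(4)[OF \<alpha>])+
  then have "0 < 1 + (slope_weight (x + \<tau>) - slope_weight x)"
    by linarith
  ultimately show "\<exists>y. ((\<lambda>v. v + (W (v + \<tau>) - W v)) has_real_derivative y) (at x) \<and> 0 < y"
    by blast
qed

lemma chart_coords_small:
  assumes \<alpha>: "chart_scale \<alpha>" and x: "\<bar>s_coord x\<bar> < \<alpha>" "(t_coord x)\<^sup>2 < \<alpha>\<^sup>2"
  shows "x \<in> ball p r" "\<bar>t_coord x\<bar> \<le> \<alpha>" "\<bar>Y1 x\<bar> \<le> 3 * \<alpha> / 2"
proof -
  have "0 < \<alpha>" using chart_scaleD(1)[OF \<alpha>] .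
  then show t: "\<bar>t_coord x\<bar> \<le> \<alpha>"
    using x(2) abs_le_square_iff[of "t_coord x" \<alpha>] by simp
  have "Y1 x = s_coord x - (W (Y1 x + t_coord x) - W (Y1 x))"
    unfolding s_coord_def by simp
  then show Y1: "\<bar>Y1 x\<bar> \<le> 3 * \<alpha> / 2"
    using abs_W_diff_le[of "Y1 x" "t_coord x"] x(1) t by linarith
  then have "\<bar>h (Y1 x)\<bar> < r / 4"
    using chart_scaleD(3)[OF \<alpha>] \<open>0 < \<alpha>\<close> by simp
  then have "\<bar>Y1 x\<bar> + \<bar>Y2 x\<bar> < r"
    using Y1 t chart_scaleD(2)[OF \<alpha>] unfolding t_coord_def by linarith
  then show "x \<in> ball p r"
    using norm_diff_le_Y[of x] by (simp add: dist_norm norm_minus_commute)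
qed

lemma inj_on_chart_coords:
  assumes \<alpha>: "chart_scale \<alpha>"
  defines "\<Psi> \<equiv> \<lambda>x. (s_coord x, (t_coord x)\<^sup>2)"
  shows "inj_on \<Psi> (closure G \<inter> \<Psi> -` {z. \<bar>fst z\<bar> < \<alpha> \<and> \<bar>snd z\<bar> < \<alpha>\<^sup>2})"
proof (rule inj_onI)
  fix x x' assume "x \<in> closure G \<inter> \<Psi> -` {z. \<bar>fst z\<bar> < \<alpha> \<and> \<bar>snd z\<bar> < \<alpha>\<^sup>2}"
    and "x' \<in> closure G \<inter> \<Psi> -` {z. \<bar>fst z\<bar> < \<alpha> \<and> \<bar>snd z\<bar> < \<alpha>\<^sup>2}"
    and eq: "\<Psi> x = \<Psi> x'"
  then have x: "x \<in> closure G" "x \<in> ball p r" "\<bar>t_coord x\<bar> \<le> \<alpha>" "\<bar>Y1 x\<bar> \<le> 3 * \<alpha> / 2"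
    and x': "x' \<in> closure G" "x' \<in> ball p r" "\<bar>t_coord x'\<bar> \<le> \<alpha>" "\<bar>Y1 x'\<bar> \<le> 3 * \<alpha> / 2"
    using chart_coords_small[OF \<alpha>] unfolding \<Psi>_def by auto
  have "t_coord x \<le> 0" "t_coord x' \<le> 0"
    using closure_below_graph x x' unfolding t_coord_def by auto
  then have t: "t_coord x = t_coord x'"
    using eq unfolding \<Psi>_def by (auto simp: power2_eq_iff)
  have Y1: "Y1 x = Y1 x'"
  proof (rule ccontr)
    assume "Y1 x \<noteq> Y1 x'"
    then consider "Y1 x < Y1 x'" | "Y1 x' < Y1 x" by linarith
    then show False
      using W_shift_strict_mono[OF \<alpha>, of _ _ "t_coord x"] x x' t eq
      unfolding \<Psi>_def s_coord_def by cases fastforce+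
  qed
  then have "Y2 x = Y2 x'"
    using t unfolding t_coord_def by simp
  with Y1 have "Q (x - x') = 0"
    using Q_diff[of x x'] by (simp add: vec2_def)
  then show "x = x'"
    by (simp add: Q_eq_0_iff)
qed

lemma boundary_point_admits_neumann_cutoffs:
  assumes "bounded G"
  shows "\<exists>W. admits_neumann_cutoffs G W \<and> p \<in> W"
proof -
  obtain \<alpha> where \<alpha>: "chart_scale \<alpha>"
    using chart_scale_exists by blast
  define \<Psi> where "\<Psi> x = (s_coord x, (t_coord x)\<^sup>2)" for x
  define B where "B = {z :: real \<times> real. \<bar>fst z\<bar> < \<alpha> \<and> \<bar>snd z\<bar> < \<alpha>\<^sup>2}"
  have open_B: "open B"
    unfolding B_def by (intro open_Collect_conj open_Collect_less continuous_intros)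
  have inj: "inj_on \<Psi> (closure G \<inter> \<Psi> -` B)"
    using inj_on_chart_coords[OF \<alpha>] unfolding \<Psi>_def[abs_def] B_def .
  define A where "A = {(y, outer_normal G y) | y. y \<in> frontier G \<and> \<Psi> y \<in> B}"
  have A: "y \<in> frontier G \<and> y \<in> ball p r \<and> n = outer_normal G y" if "(y, n) \<in> A" for y n
    using that chart_coords_small[OF \<alpha>] unfolding A_def \<Psi>_def B_def by auto
  have "C2_neumann A (\<lambda>x. fst (\<Psi> x))" "C2_neumann A (\<lambda>x. snd (\<Psi> x))"
    using C2_neumann_s_coord[of A] C2_neumann_t_coord_sq[of A] A by (simp_all add: \<Psi>_def)
  then have "admits_neumann_cutoffs G (closure G \<inter> \<Psi> -` B)"
    unfolding A_def by (rule admits_neumann_cutoffs_from_coordinates[OF assms open_B inj])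
  moreover have "p \<in> closure G \<inter> \<Psi> -` B"
    using p_frontier chart_scaleD(1)[OF \<alpha>] Y_p h_0 unfolding frontier_def \<Psi>_def B_def s_coord_def t_coord_def
    by auto
  ultimately show ?thesis by blast
qed

end

lemma interior_point_admits_neumann_cutoffs:
  assumes "bounded G" "open G" "x0 \<in> G"
  shows "\<exists>W. admits_neumann_cutoffs G W \<and> x0 \<in> W"
proof -
  obtain \<epsilon> where "\<epsilon> > 0" "ball x0 \<epsilon> \<subseteq> G"
    using assms(2,3) open_contains_ball by blast
  define \<Psi> where "\<Psi> x = (x $ 1, x $ 2)" for x :: "real^2"
  have dist_\<Psi>: "dist (\<Psi> x) (\<Psi> x0) = dist x x0" for x
    unfolding \<Psi>_def dist_Pair_Pair by (simp add: dist_real_def dist_norm norm_real2)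
  have "inj \<Psi>"
    unfolding \<Psi>_def by (auto intro!: injI simp: vec_eq_iff forall_2)
  then have inj: "inj_on \<Psi> (closure G \<inter> \<Psi> -` ball (\<Psi> x0) \<epsilon>)"
    by (rule inj_on_subset) simp
  have no_boundary: "{(y, outer_normal G y) | y. y \<in> frontier G \<and> \<Psi> y \<in> ball (\<Psi> x0) \<epsilon>} = {}"
  proof -
    have "frontier G \<inter> G = {}"
      using frontier_disjoint_eq assms(2) by blast
    then show ?thesis
      using \<open>ball x0 \<epsilon> \<subseteq> G\<close> by (force simp: dist_\<Psi> dist_commute)
  qed
  have "C2_everywhere (\<lambda>x::real^2. x $ i)" for i
    using C2_everywhere_affine[of "axis i 1" 0] by (simp add: inner_axis')
  then have "C2_neumann {(y, outer_normal G y) | y. y \<in> frontier G \<and> \<Psi> y \<in> ball (\<Psi> x0) \<epsilon>} (\<lambda>x. fst (\<Psi> x))"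
    and "C2_neumann {(y, outer_normal G y) | y. y \<in> frontier G \<and> \<Psi> y \<in> ball (\<Psi> x0) \<epsilon>} (\<lambda>x. snd (\<Psi> x))"
    unfolding no_boundary by (simp_all add: C2_neumann_empty \<Psi>_def)
  then have "admits_neumann_cutoffs G (closure G \<inter> \<Psi> -` ball (\<Psi> x0) \<epsilon>)"
    by (rule admits_neumann_cutoffs_from_coordinates[OF assms(1) open_ball inj])
  moreover have "x0 \<in> closure G \<inter> \<Psi> -` ball (\<Psi> x0) \<epsilon>"
    using assms(3) closure_subset \<open>\<epsilon> > 0\<close> by auto
  ultimately show ?thesis by blast
qed

lemma C2_domain_admits_neumann_cutoffs:
  assumes "C2_domain G" and "bounded G" and "x0 \<in> closure G"
  shows "\<exists>W. admits_neumann_cutoffs G W \<and> x0 \<in> W"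
proof -
  have open_G: "open G"
    using assms(1) unfolding C2_domain_def by blast
  show ?thesis
  proof (cases "x0 \<in> G")
    case True
    then show ?thesis
      by (rule interior_point_admits_neumann_cutoffs[OF assms(2) open_G])
  next
    case False
    then have x0: "x0 \<in> frontier G"
      using assms(3) interior_open[OF open_G] unfolding frontier_def by blast
    then obtain r Q h h' h'' where "0 < r" "orthogonal_transformation Q" "C2_derivs_real h h' h''"
      "G \<inter> ball x0 r = {x \<in> ball x0 r. Q (x - x0) $ (2::2) < h (Q (x - x0) $ 1)}"
      using assms(1) unfolding C2_domain_def C2_real_iff by blast
    then interpret boundary_chart G x0 r Q h h' h''
      using open_G x0 by unfold_locales
    show ?thesis
      by (rule boundary_point_admits_neumann_cutoffs[OF assms(2)])
  qed
qed

theorem lemma3p3: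
  fixes G :: "(real^2) set" and x0 :: "real^2"
  assumes "C2_domain G" and "bounded G" and "x0 \<in> closure G"
  shows "\<exists>W. openin (top_of_set (closure G)) W \<and> x0 \<in> W \<and>
    (\<forall>K V \<eta>. compact K \<and> K \<subseteq> W \<and> openin (top_of_set W) V \<and> K \<subseteq> V \<and>
        0 < \<eta> \<and> \<eta> < 1/2 \<longrightarrow>
      (\<exists>\<phi> C. C2_closure G \<phi> \<and> C > 0 \<and>
         (\<forall>x\<in>closure G. 0 \<le> \<phi> x \<and> \<phi> x \<le> 1) \<and>
         (\<forall>x\<in>closure G - V. \<phi> x = 0) \<and>
         (\<forall>x\<in>K. \<phi> x = 1) \<and>
         (\<forall>x\<in>frontier G. grad \<phi> x \<bullet> outer_normal G x = 0) \<and>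
         (\<forall>x\<in>closure G. norm (grad \<phi> x) \<le> C * \<phi> x powr (1 - \<eta>) \<and>
                          \<bar>laplacian \<phi> x\<bar> \<le> C * \<phi> x powr (1 - 2 * \<eta>))))"
proof -
  obtain W where W: "admits_neumann_cutoffs G W" "x0 \<in> W"
    using C2_domain_admits_neumann_cutoffs[OF assms] by blast
  show ?thesis
  proof (intro exI[of _ W] conjI allI impI)
    show "openin (top_of_set (closure G)) W" "x0 \<in> W"
      using W unfolding admits_neumann_cutoffs_def by blast+
    fix K V :: "(real^2) set" and \<eta> :: real
    assume "compact K \<and> K \<subseteq> W \<and> openin (top_of_set W) V \<and> K \<subseteq> V \<and> 0 < \<eta> \<and> \<eta> < 1/2"
    then obtain \<phi> C where "neumann_cutoff G K V \<eta> \<phi> C"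
      using W(1) unfolding admits_neumann_cutoffs_def by blast
    then show "\<exists>\<phi> C. C2_closure G \<phi> \<and> C > 0 \<and>
         (\<forall>x\<in>closure G. 0 \<le> \<phi> x \<and> \<phi> x \<le> 1) \<and>
         (\<forall>x\<in>closure G - V. \<phi> x = 0) \<and>
         (\<forall>x\<in>K. \<phi> x = 1) \<and>
         (\<forall>x\<in>frontier G. grad \<phi> x \<bullet> outer_normal G x = 0) \<and>
         (\<forall>x\<in>closure G. norm (grad \<phi> x) \<le> C * \<phi> x powr (1 - \<eta>) \<and>
                          \<bar>laplacian \<phi> x\<bar> \<le> C * \<phi> x powr (1 - 2 * \<eta>))"
      unfolding neumann_cutoff_def by (intro exI)
  qed
qed

end
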